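(* Let $k$ be an algebraically closed field, $G$ a connected linear algebraic group over $k$, and $V$ an $n$-dimensional algebraic $G$-module with basis $e_1,\ldots,e_n$ and dual basis $z_1,\ldots,z_n$ of $V^*$; identify $V$ with $\mathbb A^n$ via $\sum\gamma_ie_i\mapsto(\gamma_1,\ldots,\gamma_n)$. Let $\rho_{p,q}$ ($1\le p,q\le n$) be the regular functions on $G$ with $g\cdot\bigl(\sum_q\gamma_qe_q\bigr)=\sum_p\bigl(\sum_q\rho_{p,q}(g)\gamma_q\bigr)e_p$. Fix $r,s\in\mathbb N$ and a dominant morphism $\iota\colon\mathbb A^{r,s}\to G$. Let $L$ be an affine linear subvariety of $V$ and $\tau\colon\mathbb A^l\to V$ a morphism whose image is dense in $L$. Let $x_1,\ldots,x_{r+s},y_1,\ldots,y_l$ be the standard coordinates on $\mathbb A^{r+s+l}\supset\mathbb A^{r,s}\times\mathbb A^l$, and set $$f_p:=\sum_{q=1}^n\iota^*(\rho_{p,q})\,\tau^*(z_q)\in k[x_1,\ldots,x_{r+s},x_1^{-1},\ldots,x_r^{-1},y_1,\ldots,y_l],\quad 1\le p\le n,$$ written as $f_p=g_p/h_p$ with $g_p\in k[x_1,\ldots,x_{r+s},y_1,\ldots,y_l]$ and $h_p\in k[x_1,\ldots,x_r]$. In the polynomial ring $k[t,x_1,\ldots,x_{r+s},y_1,\ldots,y_l,z_1,\ldots,z_n]$ ($t$ a new variable), let $\mathcal G$ be a Gröbner basis of the ideal generated by $h_1z_1-g_1,\ldots,h_nz_n-g_n,\,1-h_1\cdots h_nt$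 with respect to a monomial order in which every variable $t,x_i,y_j$ is bigger than every variable $z_p$ (an elimination order for $t,x_1,\ldots,x_{r+s},y_1,\ldots,y_l$, e.g. a lexicographic one). Let $q_1,\ldots,q_m$ be all elements of $\mathcal G$ lying in $k[z_1,\ldots,z_n]$. Then $$\overline{G\cdot L}=\{v\in\mathbb A^n\mid q_1(v)=\cdots=q_m(v)=0\},$$ where the bar denotes Zariski closure in $V=\mathbb A^n$.
   Context: $\mathbb N$ is the set of nonnegative integers; $\mathbb A^{r,s}:=\{(\varepsilon_1,\ldots,\varepsilon_{r+s})\in\mathbb A^{r+s}\mid\varepsilon_1\cdots\varepsilon_r\neq0\}$, identified with an open subset of $\mathbb A^{r+s}$; $\iota^*(\rho_{p,q})\in k[x_1,\ldots,x_{r+s},x_1^{-1},\ldots,x_r^{-1}]$ and $\tau^*(z_q)\in k[y_1,\ldots,y_l]$. $G\cdot L=\{g\cdot v\mid g\in G,\ v\in L\}$. *)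

theory Defs
  imports "Jordan_Normal_Form.Determinant" "HOL-Library.Poly_Mapping"
begin

definition alg_closed :: "'k::field itself \<Rightarrow> bool" where
  "alg_closed _ \<longleftrightarrow> (\<forall>p :: 'k poly. degree p > 0 \<longrightarrow> (\<exists>x. poly p x = 0))"

type_synonym 'k mpoly = "(nat \<Rightarrow>\<^sub>0 nat) \<Rightarrow>\<^sub>0 'k"

definition mpeval :: "'k::comm_ring_1 mpoly \<Rightarrow> (nat \<Rightarrow> 'k) \<Rightarrow> 'k" where
  "mpeval p a = (\<Sum>m\<in>Poly_Mapping.keys p. Poly_Mapping.lookup p m * (\<Prod>i\<in>Poly_Mapping.keys m. a i ^ Poly_Mapping.lookup m i))"

definition mvars :: "'k::zero mpoly \<Rightarrow> nat set" where
  "mvars p = \<Union> (Poly_Mapping.keys ` Poly_Mapping.keys p)"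

definition Var :: "nat \<Rightarrow> 'k::{zero,one} mpoly" where
  "Var i = Poly_Mapping.single (Poly_Mapping.single i 1) 1"

definition ideal_gen :: "'k::comm_ring_1 mpoly set \<Rightarrow> 'k mpoly set" where
  "ideal_gen F = {p. \<exists>S c. finite S \<and> S \<subseteq> F \<and> p = (\<Sum>f\<in>S. c f * f)}"

definition monomial_order :: "((nat \<Rightarrow>\<^sub>0 nat) \<Rightarrow> (nat \<Rightarrow>\<^sub>0 nat) \<Rightarrow> bool) \<Rightarrow> bool" where
  "monomial_order ord \<longleftrightarrow>
     (\<forall>s. ord s s) \<and> (\<forall>s t. ord s t \<and> ord t s \<longrightarrow> s = t) \<and>
     (\<forall>s t u. ord s t \<and> ord t u \<longrightarrow> ord s u) \<and> (\<forall>s t. ord s t \<or> ord t s) \<and>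
     (\<forall>t. ord 0 t) \<and> (\<forall>s t u. ord s t \<longrightarrow> ord (s + u) (t + u)) \<and>
     wfP (\<lambda>s t. ord s t \<and> s \<noteq> t)"

definition elimination_order :: "((nat \<Rightarrow>\<^sub>0 nat) \<Rightarrow> (nat \<Rightarrow>\<^sub>0 nat) \<Rightarrow> bool) \<Rightarrow> nat set \<Rightarrow> bool" where
  "elimination_order ord X \<longleftrightarrow> monomial_order ord \<and>
     (\<forall>s t. ord s t \<and> Poly_Mapping.keys t \<inter> X = {} \<longrightarrow> Poly_Mapping.keys s \<inter> X = {})"

definition lead_mon :: "((nat \<Rightarrow>\<^sub>0 nat) \<Rightarrow> (nat \<Rightarrow>\<^sub>0 nat) \<Rightarrow> bool) \<Rightarrow> 'k::zero mpoly \<Rightarrow> nat \<Rightarrow>\<^sub>0 nat" where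
  "lead_mon ord p = (THE m. m \<in> Poly_Mapping.keys p \<and> (\<forall>m'\<in>Poly_Mapping.keys p. ord m' m))"

definition mon_dvd :: "(nat \<Rightarrow>\<^sub>0 nat) \<Rightarrow> (nat \<Rightarrow>\<^sub>0 nat) \<Rightarrow> bool" where
  "mon_dvd s t \<longleftrightarrow> (\<exists>u. t = s + u)"

text \<open>Groebner basis of the ideal generated by F inside the polynomial ring in the variables Vs.\<close>
definition is_groebner_basis ::
  "((nat \<Rightarrow>\<^sub>0 nat) \<Rightarrow> (nat \<Rightarrow>\<^sub>0 nat) \<Rightarrow> bool) \<Rightarrow> nat set \<Rightarrow> 'k::comm_ring_1 mpoly set \<Rightarrow> 'k mpoly set \<Rightarrow> bool" where
  "is_groebner_basis ord Vs Gb F \<longleftrightarrow>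
     finite Gb \<and> (\<forall>g\<in>Gb. mvars g \<subseteq> Vs) \<and> ideal_gen Gb = ideal_gen F \<and>
     (\<forall>p\<in>ideal_gen F. mvars p \<subseteq> Vs \<and> p \<noteq> 0 \<longrightarrow>
        (\<exists>g\<in>Gb. g \<noteq> 0 \<and> mon_dvd (lead_mon ord g) (lead_mon ord p)))"

text \<open>Points of affine d-space are functions nat => k supported in {1..d}.\<close>
definition aff :: "nat \<Rightarrow> (nat \<Rightarrow> 'k::zero) set" where
  "aff d = {a. \<forall>i. i = 0 \<or> d < i \<longrightarrow> a i = 0}"

definition zariski_closed :: "nat \<Rightarrow> (nat \<Rightarrow> 'k::comm_ring_1) set \<Rightarrow> bool" where
  "zariski_closed d C \<longleftrightarrow> (\<exists>P. (\<forall>p\<in>P. mvars p \<subseteq> {1..d}) \<and>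
       C = {a \<in> aff d. \<forall>p\<in>P. mpeval p a = 0})"

definition zariski_closure :: "nat \<Rightarrow> (nat \<Rightarrow> 'k::comm_ring_1) set \<Rightarrow> (nat \<Rightarrow> 'k) set" where
  "zariski_closure d S = \<Inter> {C. zariski_closed d C \<and> S \<subseteq> C}"

definition Ars :: "nat \<Rightarrow> nat \<Rightarrow> (nat \<Rightarrow> 'k::comm_ring_1) set" where
  "Ars r s = {a \<in> aff (r + s). (\<Prod>i=1..r. a i) \<noteq> 0}"

text \<open>Coordinates of an N x N matrix as a point of A^(N*N).\<close>
definition mat_coords :: "nat \<Rightarrow> 'k::zero mat \<Rightarrow> nat \<Rightarrow> 'k" where
  "mat_coords N A = (\<lambda>i. if 1 \<le> i \<and> i \<le> N * N then A $$ ((i - 1) div N, (i - 1) mod N) else 0)"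

definition linear_algebraic_group :: "nat \<Rightarrow> 'k::field mat set \<Rightarrow> bool" where
  "linear_algebraic_group N G \<longleftrightarrow>
     G \<subseteq> carrier_mat N N \<and> (\<forall>A\<in>G. det A \<noteq> 0) \<and>
     1\<^sub>m N \<in> G \<and> (\<forall>A\<in>G. \<forall>B\<in>G. A * B \<in> G) \<and> (\<forall>A\<in>G. \<exists>B\<in>G. A * B = 1\<^sub>m N) \<and>
     (\<exists>C. zariski_closed (N * N) C \<and>
        G = {A \<in> carrier_mat N N. det A \<noteq> 0 \<and> mat_coords N A \<in> C})"

definition zariski_connected_group :: "nat \<Rightarrow> 'k::field mat set \<Rightarrow> bool" where
  "zariski_connected_group N G \<longleftrightarrow>
     (\<forall>C1 C2. zariski_closed (N * N) C1 \<and> zariski_closed (N * N) C2 \<and>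
        mat_coords N ` G \<subseteq> C1 \<union> C2 \<and> mat_coords N ` G \<inter> C1 \<inter> C2 = {} \<longrightarrow>
        mat_coords N ` G \<subseteq> C1 \<or> mat_coords N ` G \<subseteq> C2)"

text \<open>Regular functions on G: restrictions of elements of k[GL_N] = k[entries, 1/det].\<close>
definition regular_on_group :: "nat \<Rightarrow> 'k::field mat set \<Rightarrow> ('k mat \<Rightarrow> 'k) \<Rightarrow> bool" where
  "regular_on_group N G f \<longleftrightarrow> (\<exists>P e. mvars P \<subseteq> {1..N * N} \<and>
      (\<forall>A\<in>G. f A = mpeval P (mat_coords N A) / det A ^ e))"

text \<open>An algebraic G-module structure on k^n, given by its matrix coefficients rho p q (1 <= p,q <= n).\<close>
definition rep_matrix :: "nat \<Rightarrow> (nat \<Rightarrow> nat \<Rightarrow> 'k mat \<Rightarrow> 'k) \<Rightarrow> 'k mat \<Rightarrow> 'k mat" where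
  "rep_matrix n \<rho> g = mat n n (\<lambda>(p, q). \<rho> (Suc p) (Suc q) g)"

definition algebraic_G_module ::
  "nat \<Rightarrow> 'k::field mat set \<Rightarrow> nat \<Rightarrow> (nat \<Rightarrow> nat \<Rightarrow> 'k mat \<Rightarrow> 'k) \<Rightarrow> bool" where
  "algebraic_G_module N G n \<rho> \<longleftrightarrow>
     (\<forall>p\<in>{1..n}. \<forall>q\<in>{1..n}. regular_on_group N G (\<rho> p q)) \<and>
     rep_matrix n \<rho> (1\<^sub>m N) = 1\<^sub>m n \<and>
     (\<forall>A\<in>G. \<forall>B\<in>G. rep_matrix n \<rho> (A * B) = rep_matrix n \<rho> A * rep_matrix n \<rho> B)"

definition act :: "nat \<Rightarrow> (nat \<Rightarrow> nat \<Rightarrow> 'k mat \<Rightarrow> 'k::comm_ring_1) \<Rightarrow> 'k mat \<Rightarrow> (nat \<Rightarrow> 'k) \<Rightarrow> nat \<Rightarrow> 'k" where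
  "act n \<rho> g v = (\<lambda>p. if 1 \<le> p \<and> p \<le> n then (\<Sum>q=1..n. \<rho> p q g * v q) else 0)"

definition orbit_set ::
  "nat \<Rightarrow> (nat \<Rightarrow> nat \<Rightarrow> 'k mat \<Rightarrow> 'k::comm_ring_1) \<Rightarrow> 'k mat set \<Rightarrow> (nat \<Rightarrow> 'k) set \<Rightarrow> (nat \<Rightarrow> 'k) set" where
  "orbit_set n \<rho> G L = {act n \<rho> g v | g v. g \<in> G \<and> v \<in> L}"

text \<open>A morphism A^{r,s} -> G: every matrix entry is a regular function on A^{r,s},
  i.e. a polynomial divided by a power of x_1 ... x_r.\<close>
definition morphism_Ars_to_group ::
  "nat \<Rightarrow> nat \<Rightarrow> nat \<Rightarrow> 'k::field mat set \<Rightarrow> ((nat \<Rightarrow> 'k) \<Rightarrow> 'k mat) \<Rightarrow> bool" where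
  "morphism_Ars_to_group r s N G \<iota> \<longleftrightarrow>
     (\<forall>a\<in>Ars r s. \<iota> a \<in> G) \<and>
     (\<forall>i<N. \<forall>j<N. \<exists>P e. mvars P \<subseteq> {1..r + s} \<and>
        (\<forall>a\<in>Ars r s. \<iota> a $$ (i, j) = mpeval P a / (\<Prod>l=1..r. a l) ^ e))"

definition dominant_Ars_to_group ::
  "nat \<Rightarrow> nat \<Rightarrow> nat \<Rightarrow> 'k::field mat set \<Rightarrow> ((nat \<Rightarrow> 'k) \<Rightarrow> 'k mat) \<Rightarrow> bool" where
  "dominant_Ars_to_group r s N G \<iota> \<longleftrightarrow> morphism_Ars_to_group r s N G \<iota> \<and>
     mat_coords N ` G \<subseteq> zariski_closure (N * N) (mat_coords N ` \<iota> ` Ars r s)"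

definition morphism_aff :: "nat \<Rightarrow> nat \<Rightarrow> ((nat \<Rightarrow> 'k::comm_ring_1) \<Rightarrow> nat \<Rightarrow> 'k) \<Rightarrow> bool" where
  "morphism_aff l n \<tau> \<longleftrightarrow> (\<forall>b\<in>aff l. \<tau> b \<in> aff n) \<and>
     (\<forall>q\<in>{1..n}. \<exists>P. mvars P \<subseteq> {1..l} \<and> (\<forall>b\<in>aff l. \<tau> b q = mpeval P b))"

definition affine_linear_subvariety :: "nat \<Rightarrow> (nat \<Rightarrow> 'k::field) set \<Rightarrow> bool" where
  "affine_linear_subvariety n L \<longleftrightarrow> (\<exists>v0\<in>aff n. \<exists>W. W \<subseteq> aff n \<and> (\<lambda>i. 0) \<in> W \<and>
      (\<forall>u\<in>W. \<forall>w\<in>W. (\<lambda>i. u i + w i) \<in> W) \<and> (\<forall>c. \<forall>w\<in>W. (\<lambda>i. c * w i) \<in> W) \<and>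
      L = (\<lambda>w i. v0 i + w i) ` W)"

text \<open>Variables: t = 0, x_i = i (1 <= i <= r+s), y_j = r+s+j (1 <= j <= l),
  z_p = r+s+l+p (1 <= p <= n).\<close>

definition xpart :: "nat \<Rightarrow> nat \<Rightarrow> (nat \<Rightarrow> 'k::zero) \<Rightarrow> nat \<Rightarrow> 'k" where
  "xpart r s a = (\<lambda>i. if 1 \<le> i \<and> i \<le> r + s then a i else 0)"

definition ypart :: "nat \<Rightarrow> nat \<Rightarrow> nat \<Rightarrow> (nat \<Rightarrow> 'k::zero) \<Rightarrow> nat \<Rightarrow> 'k" where
  "ypart r s l a = (\<lambda>j. if 1 \<le> j \<and> j \<le> l then a (r + s + j) else 0)"

definition Ars_times_aff :: "nat \<Rightarrow> nat \<Rightarrow> nat \<Rightarrow> (nat \<Rightarrow> 'k::comm_ring_1) set" where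
  "Ars_times_aff r s l = {a \<in> aff (r + s + l). (\<Prod>i=1..r. a i) \<noteq> 0}"

text \<open>z-point of v in A^n: the assignment z_p := v_p.\<close>
definition zpoint :: "nat \<Rightarrow> (nat \<Rightarrow> 'k::zero) \<Rightarrow> nat \<Rightarrow> 'k" where
  "zpoint m v = (\<lambda>i. if m < i then v (i - m) else 0)"

end

theory Submission
  imports Defs
begin

text \<open>
  Write \<open>M = r + s + l\<close>, \<open>U \<subseteq> \<bbbA>\<^sup>M\<close> for the locus where all \<open>h\<^sub>p\<close> are nonzero and
  \<open>\<Phi> = (g\<^sub>1/h\<^sub>1, \<dots>, g\<^sub>n/h\<^sub>n) : U \<rightarrow> \<bbbA>\<^sup>n\<close>. On the dense subset of \<open>\<bbbA>\<^sup>r\<^sup>,\<^sup>s \<times> \<bbbA>\<^sup>l\<close> where \<open>\<Phi>\<close>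
  is defined, \<open>\<Phi>(x, y) = \<iota>(x) \<cdot> \<tau>(y)\<close>. A polynomial therefore vanishes on \<open>G \<cdot> L\<close> iff it vanishes
  on \<open>\<Phi>(U)\<close>: one direction is immediate, the other passes through three density arguments
  (\<open>U \<inter> \<bbbA>\<^sup>r\<^sup>,\<^sup>s \<times> \<bbbA>\<^sup>l\<close> is dense in \<open>\<bbbA>\<^sup>r\<^sup>,\<^sup>s \<times> \<bbbA>\<^sup>l\<close>, \<open>\<iota>\<close> is dominant, \<open>\<tau>\<close> has dense image in \<open>L\<close>),
  each time applied to a rational function whose numerator must vanish on a Zariski closure.
  By the Rabinowitsch trick, the polynomials in \<open>z\<close> vanishing on \<open>\<Phi>(U)\<close> are exactly the elements of
  \<open>I \<inter> k[z]\<close>, where \<open>I = (h\<^sub>p z\<^sub>p - g\<^sub>p, 1 - h\<^sub>1\<cdots>h\<^sub>n t)\<close>: modulo \<open>I\<close>, \<open>t\<close> inverts \<open>H = h\<^sub>1\<cdots>h\<^sub>n\<close>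
  and \<open>H z\<^sub>p\<close> becomes a polynomial in \<open>x\<close>, so some \<open>H\<^sup>D q\<close> is congruent to a polynomial in \<open>x\<close> that
  vanishes on \<open>U\<close>, hence is zero. Finally, for an elimination order the Gr\<ouml>bner basis elements
  lying in \<open>k[z]\<close> have the same common zeros as \<open>I \<inter> k[z]\<close>, by running the division algorithm.
\<close>


definition eval_mon :: "(nat \<Rightarrow>\<^sub>0 nat) \<Rightarrow> (nat \<Rightarrow> 'k::comm_ring_1) \<Rightarrow> 'k" where
  "eval_mon m a = (\<Prod>i\<in>Poly_Mapping.keys m. a i ^ Poly_Mapping.lookup m i)"

lemma mpeval_eq_sum_eval_mon:
  "mpeval p a = (\<Sum>m\<in>Poly_Mapping.keys p. Poly_Mapping.lookup p m * eval_mon m a)"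
  unfolding mpeval_def eval_mon_def by simp

lemma eval_mon_superset:
  assumes "finite S" "Poly_Mapping.keys m \<subseteq> S"
  shows "eval_mon m a = (\<Prod>i\<in>S. a i ^ Poly_Mapping.lookup m i)"
  unfolding eval_mon_def
  by (rule prod.mono_neutral_left[OF assms]) (auto simp: in_keys_iff)

lemma eval_mon_0 [simp]: "eval_mon 0 a = 1"
  unfolding eval_mon_def by simp

lemma eval_mon_add: "eval_mon (m + m') a = eval_mon m a * eval_mon m' a"
proof -
  let ?S = "Poly_Mapping.keys m \<union> Poly_Mapping.keys m' \<union> Poly_Mapping.keys (m + m')"
  have S: "finite ?S" by simp
  have "eval_mon (m + m') a = (\<Prod>i\<in>?S. a i ^ Poly_Mapping.lookup m i * a i ^ Poly_Mapping.lookup m' i)"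
    by (subst eval_mon_superset[OF S]) (auto simp: lookup_add power_add)
  also have "\<dots> = eval_mon m a * eval_mon m' a"
    by (subst (1 2) eval_mon_superset[OF S]) (auto simp: prod.distrib)
  finally show ?thesis .
qed

lemma eval_mon_single: "eval_mon (Poly_Mapping.single i e) a = a i ^ e"
  unfolding eval_mon_def by (cases "e = 0") auto

lemma mpeval_superset:
  assumes "finite K" "Poly_Mapping.keys p \<subseteq> K"
  shows "mpeval p a = (\<Sum>m\<in>K. Poly_Mapping.lookup p m * eval_mon m a)"
  unfolding mpeval_eq_sum_eval_mon
  by (rule sum.mono_neutral_left[OF assms]) (auto simp: in_keys_iff)

lemma mpeval_0 [simp]: "mpeval 0 a = 0"
  unfolding mpeval_def by simp

lemma mpeval_add [simp]: "mpeval (p + q) a = mpeval p a + mpeval q a"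
proof -
  let ?K = "Poly_Mapping.keys p \<union> Poly_Mapping.keys q \<union> Poly_Mapping.keys (p + q)"
  have K: "finite ?K" by simp
  show ?thesis
    by (subst (1 2 3) mpeval_superset[OF K]) (auto simp: lookup_add distrib_right sum.distrib)
qed

lemma mpeval_sum [simp]: "mpeval (sum f A) a = (\<Sum>x\<in>A. mpeval (f x) a)"
  by (induction A rule: infinite_finite_induct) auto

lemma mpeval_single: "mpeval (Poly_Mapping.single m c) a = c * eval_mon m a"
  unfolding mpeval_eq_sum_eval_mon by auto

lemma poly_mapping_sum_single:
  "(\<Sum>m\<in>Poly_Mapping.keys p. Poly_Mapping.single m (Poly_Mapping.lookup p m)) = p"
proof (rule poly_mapping_eqI)
  fix k
  show "Poly_Mapping.lookup (\<Sum>m\<in>Poly_Mapping.keys p. Poly_Mapping.single m (Poly_Mapping.lookup p m)) k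
        = Poly_Mapping.lookup p k"
    by (cases "k \<in> Poly_Mapping.keys p")
       (auto simp: lookup_sum lookup_single in_keys_iff when_def sum.delta' cong: if_cong)
qed

lemma mpeval_mult [simp]: "mpeval (p * q) a = mpeval p a * mpeval q a"
proof -
  have "mpeval (p * q) a = mpeval ((\<Sum>m\<in>Poly_Mapping.keys p. Poly_Mapping.single m (Poly_Mapping.lookup p m)) *
      (\<Sum>m\<in>Poly_Mapping.keys q. Poly_Mapping.single m (Poly_Mapping.lookup q m))) a"
    by (simp only: poly_mapping_sum_single)
  also have "\<dots> = (\<Sum>m\<in>Poly_Mapping.keys p. \<Sum>m'\<in>Poly_Mapping.keys q.
      Poly_Mapping.lookup p m * eval_mon m a * (Poly_Mapping.lookup q m' * eval_mon m' a))"
    by (simp add: sum_product mult_single mpeval_single eval_mon_add mult_ac)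
  also have "\<dots> = mpeval p a * mpeval q a"
    by (simp add: mpeval_eq_sum_eval_mon sum_product)
  finally show ?thesis .
qed

definition Const :: "'k::zero \<Rightarrow> 'k mpoly" where
  "Const c = Poly_Mapping.single 0 c"

lemma mpeval_Const [simp]: "mpeval (Const c) a = c"
  unfolding Const_def by (simp add: mpeval_single)

lemma mpeval_1 [simp]: "mpeval 1 a = 1"
  using mpeval_Const[of 1 a] unfolding Const_def by simp

lemma mpeval_uminus [simp]: "mpeval (- p) a = - mpeval p a"
  using mpeval_add[of p "- p" a] by (simp add: eq_neg_iff_add_eq_0 add.commute)

lemma mpeval_diff [simp]: "mpeval (p - q) a = mpeval p a - mpeval q a"
  using mpeval_add[of p "- q" a] by simp

lemma mpeval_prod [simp]: "mpeval (prod f A) a = (\<Prod>x\<in>A. mpeval (f x) a)"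
  by (induction A rule: infinite_finite_induct) auto

lemma mpeval_power [simp]: "mpeval (p ^ e) a = mpeval p a ^ e"
  by (induction e) auto

lemma mpeval_Var [simp]: "mpeval (Var i) a = a i"
  unfolding Var_def by (simp add: mpeval_single eval_mon_def)

lemma mpeval_cong:
  assumes "\<And>i. i \<in> mvars p \<Longrightarrow> a i = b i"
  shows "mpeval p a = mpeval p b"
  unfolding mpeval_def using assms
  by (intro sum.cong refl arg_cong[where f="(*) _"] prod.cong) (metis UN_I mvars_def)

lemma finite_mvars: "finite (mvars p)"
  unfolding mvars_def by simp

lemma mvars_add: "mvars (p + q) \<subseteq> mvars p \<union> mvars q"
  unfolding mvars_def using keys_add[of p q] by blast

lemma keys_add_nat:
  "Poly_Mapping.keys (m + m' :: nat \<Rightarrow>\<^sub>0 nat) = Poly_Mapping.keys m \<union> Poly_Mapping.keys m'"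
  by (auto simp: in_keys_iff lookup_add)

lemma mvars_mult: "mvars (p * q) \<subseteq> mvars p \<union> mvars q"
  unfolding mvars_def using keys_mult[of p q] by (force simp: keys_add_nat)

lemma mvars_diff: "mvars (p - q :: 'k::comm_ring_1 mpoly) \<subseteq> mvars p \<union> mvars q"
  using mvars_add[of p "- q"] by (simp add: mvars_def keys_minus)

lemma mvars_1 [simp]: "mvars 1 = {}"
  unfolding mvars_def by simp

lemma mvars_Const [simp]: "mvars (Const c) = {}"
  unfolding mvars_def Const_def by simp

lemma mvars_Var [simp]: "mvars (Var i :: 'k::zero_neq_one mpoly) = {i}"
  unfolding mvars_def Var_def by simp

lemma mvars_sum: "mvars (sum f A) \<subseteq> (\<Union>x\<in>A. mvars (f x))"
proof (induction A rule: infinite_finite_induct)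
  case (insert x F) then show ?case using mvars_add[of "f x" "sum f F"] by auto
qed (auto simp: mvars_def)

lemma mvars_prod: "mvars (prod f A) \<subseteq> (\<Union>x\<in>A. mvars (f x))"
proof (induction A rule: infinite_finite_induct)
  case (insert x F) then show ?case using mvars_mult[of "f x" "prod f F"] by auto
qed (auto simp: mvars_def)

lemma mvars_power: "mvars (p ^ e) \<subseteq> mvars p"
proof (induction e)
  case (Suc e) then show ?case using mvars_mult[of p "p ^ e"] by auto
qed (simp add: mvars_def)

section \<open>Polynomials over an infinite field\<close>

lemma alg_closed_imp_infinite:
  assumes "alg_closed TYPE('k::field)"
  shows "infinite (UNIV :: 'k set)"
proof
  assume fin: "finite (UNIV :: 'k set)"
  define q :: "'k poly" where "q = (\<Prod>c\<in>UNIV. [:-c, 1:])"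
  have "card (UNIV :: 'k set) \<ge> card {0::'k, 1}"
    by (rule card_mono[OF fin]) auto
  then have "degree (q + 1) > 0"
    unfolding q_def by (subst degree_add_eq_left) (auto simp: degree_prod_eq_sum_degree)
  then obtain x where "poly (q + 1) x = 0"
    using assms unfolding alg_closed_def by blast
  moreover have "poly q x = 0"
    using fin by (auto simp: q_def poly_prod prod_zero_iff intro: bexI[of _ x])
  ultimately show False by simp
qed

lemma update_plus_single_lookup:
  "Poly_Mapping.update d 0 m + Poly_Mapping.single d (Poly_Mapping.lookup m d) = (m :: nat \<Rightarrow>\<^sub>0 nat)"
  by (rule poly_mapping_eqI) (simp add: lookup_update lookup_add lookup_single when_def)

definition var_coeff :: "nat \<Rightarrow> nat \<Rightarrow> 'k::comm_monoid_add mpoly \<Rightarrow> 'k mpoly" where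
  "var_coeff d e P = (\<Sum>m\<in>{m \<in> Poly_Mapping.keys P. Poly_Mapping.lookup m d = e}.
      Poly_Mapping.single (Poly_Mapping.update d 0 m) (Poly_Mapping.lookup P m))"

lemma mvars_var_coeff: "mvars (var_coeff d e P) \<subseteq> mvars P - {d}"
proof -
  have "mvars (Poly_Mapping.single (Poly_Mapping.update d 0 m) c) \<subseteq> mvars P - {d}"
    if "m \<in> Poly_Mapping.keys P" for m c
  proof -
    have "Poly_Mapping.keys (Poly_Mapping.update d 0 m) \<subseteq> Poly_Mapping.keys m - {d}"
      by (auto simp: in_keys_iff lookup_update split: if_splits)
    then show ?thesis using that unfolding mvars_def by auto
  qed
  then show ?thesis unfolding var_coeff_def using mvars_sum by fastforce
qed

lemma mpeval_expand_var:
  "mpeval P a = (\<Sum>e\<in>(\<lambda>m. Poly_Mapping.lookup m d) ` Poly_Mapping.keys P. mpeval (var_coeff d e P) a * a d ^ e)"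
proof -
  let ?S = "\<lambda>e. {m \<in> Poly_Mapping.keys P. Poly_Mapping.lookup m d = e}"
  have "mpeval P a = (\<Sum>e\<in>(\<lambda>m. Poly_Mapping.lookup m d) ` Poly_Mapping.keys P.
      \<Sum>m\<in>?S e. Poly_Mapping.lookup P m * eval_mon m a)"
    unfolding mpeval_eq_sum_eval_mon by (rule sum.group[symmetric]) auto
  also have "\<dots> = (\<Sum>e\<in>(\<lambda>m. Poly_Mapping.lookup m d) ` Poly_Mapping.keys P.
      \<Sum>m\<in>?S e. Poly_Mapping.lookup P m * eval_mon (Poly_Mapping.update d 0 m) a * a d ^ e)"
  proof (intro sum.cong refl)
    fix e m assume "m \<in> ?S e"
    then have e: "Poly_Mapping.lookup m d = e" by simp
    have "eval_mon m a =
        eval_mon (Poly_Mapping.update d 0 m + Poly_Mapping.single d (Poly_Mapping.lookup m d)) a"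
      by (simp only: update_plus_single_lookup)
    then show "Poly_Mapping.lookup P m * eval_mon m a =
        Poly_Mapping.lookup P m * eval_mon (Poly_Mapping.update d 0 m) a * a d ^ e"
      by (simp only: eval_mon_add eval_mon_single e mult.assoc)
  qed
  also have "\<dots> = (\<Sum>e\<in>(\<lambda>m. Poly_Mapping.lookup m d) ` Poly_Mapping.keys P. mpeval (var_coeff d e P) a * a d ^ e)"
    unfolding var_coeff_def by (simp add: mpeval_single sum_distrib_right)
  finally show ?thesis .
qed

lemma lookup_var_coeff:
  assumes "m \<in> Poly_Mapping.keys P"
  shows "Poly_Mapping.lookup (var_coeff d (Poly_Mapping.lookup m d) P) (Poly_Mapping.update d 0 m) =
    Poly_Mapping.lookup P m"
proof -
  let ?S = "{m' \<in> Poly_Mapping.keys P. Poly_Mapping.lookup m' d = Poly_Mapping.lookup m d}"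
  have "Poly_Mapping.update d 0 m' = Poly_Mapping.update d 0 m \<longleftrightarrow> m' = m" if "m' \<in> ?S" for m'
    using that update_plus_single_lookup[of d m] update_plus_single_lookup[of d m'] by auto
  then have "Poly_Mapping.lookup (var_coeff d (Poly_Mapping.lookup m d) P) (Poly_Mapping.update d 0 m) =
      (\<Sum>m'\<in>?S. if m' = m then Poly_Mapping.lookup P m' else 0)"
    unfolding var_coeff_def lookup_sum by (intro sum.cong refl) (auto simp: lookup_single when_def)
  also have "\<dots> = Poly_Mapping.lookup P m" using assms by simp
  finally show ?thesis .
qed

lemma mpoly_nonzero_has_nonroot:
  assumes inf: "infinite (UNIV :: 'k::field set)" and "P \<noteq> (0 :: 'k mpoly)"
  shows "\<exists>a. mpeval P a \<noteq> 0"
proof -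
  have "\<And>P :: 'k mpoly. mvars P \<subseteq> X \<Longrightarrow> P \<noteq> 0 \<Longrightarrow> \<exists>a. mpeval P a \<noteq> 0" if "finite X" for X
    using that
  proof (induction X rule: finite_induct)
    case empty
    then have "Poly_Mapping.keys P \<subseteq> {0}" unfolding mvars_def by auto
    then have "Poly_Mapping.keys P = {0}"
      using empty.prems(2) by (metis keys_eq_empty subset_singletonD)
    then have "mpeval P a = Poly_Mapping.lookup P 0" for a
      by (simp add: mpeval_eq_sum_eval_mon)
    with \<open>Poly_Mapping.keys P = {0}\<close> show ?case by (auto simp: in_keys_iff)
  next
    case (insert d X)
    define E where "E = (\<lambda>m. Poly_Mapping.lookup m d) ` Poly_Mapping.keys P"
    obtain m0 where m0: "m0 \<in> Poly_Mapping.keys P" using insert.prems(2) by fastforce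
    define e0 where "e0 = Poly_Mapping.lookup m0 d"
    have "var_coeff d e0 P \<noteq> 0"
      using lookup_var_coeff[OF m0, of d] m0 unfolding e0_def by (auto simp: in_keys_iff)
    moreover have C_vars: "mvars (var_coeff d e P) \<subseteq> X" for e
      using mvars_var_coeff[of d e P] insert.prems(1) by blast
    ultimately obtain b where b: "mpeval (var_coeff d e0 P) b \<noteq> 0"
      using insert.IH by blast
    define u where "u = (\<Sum>e\<in>E. monom (mpeval (var_coeff d e P) b) e)"
    have "coeff u e0 = mpeval (var_coeff d e0 P) b"
      unfolding u_def coeff_sum using m0 by (simp add: sum.delta E_def e0_def)
    then have "u \<noteq> 0" using b by auto
    then have "finite {x. poly u x = 0}" by (rule poly_roots_finite)
    then obtain x where x: "poly u x \<noteq> 0" using ex_new_if_finite[OF inf] by blast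
    have "mpeval (var_coeff d e P) (b(d := x)) = mpeval (var_coeff d e P) b" for e
      by (rule mpeval_cong) (use C_vars insert.hyps in auto)
    then have "mpeval P (b(d := x)) = poly u x"
      unfolding mpeval_expand_var[of P _ d] u_def E_def by (simp add: poly_sum poly_monom)
    with x have "mpeval P (b(d := x)) \<noteq> 0" by simp
    then show ?case by (rule exI[of _ "b(d := x)"])
  qed
  then show ?thesis using finite_mvars assms(2) by blast
qed

lemma mpoly_eq_0_if_vanishes_off_zeros:
  assumes inf: "infinite (UNIV :: 'k::field set)" and Q: "Q \<noteq> (0 :: 'k mpoly)" "mvars Q \<subseteq> {1..d}"
    and R: "mvars R \<subseteq> {1..d}" "\<forall>a\<in>aff d. mpeval Q a \<noteq> 0 \<longrightarrow> mpeval R a = 0"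
  shows "R = 0"
proof (rule ccontr)
  assume "R \<noteq> 0"
  with Q obtain a where a: "mpeval (R * Q) a \<noteq> 0"
    using mpoly_nonzero_has_nonroot[OF inf, of "R * Q"] by auto
  define a' where "a' = (\<lambda>i. if 1 \<le> i \<and> i \<le> d then a i else 0)"
  have "mvars (R * Q) \<subseteq> {1..d}" using mvars_mult[of R Q] Q(2) R(1) by auto
  then have "mpeval (R * Q) a' = mpeval (R * Q) a"
    by (intro mpeval_cong) (auto simp: a'_def)
  moreover have "a' \<in> aff d" by (simp add: a'_def aff_def)
  ultimately show False using a R(2) by auto
qed

lemma zariski_closure_iff:
  assumes "S \<subseteq> aff d"
  shows "a \<in> zariski_closure d S \<longleftrightarrow>
    a \<in> aff d \<and> (\<forall>p. mvars p \<subseteq> {1..d} \<longrightarrow> (\<forall>b\<in>S. mpeval p b = 0) \<longrightarrow> mpeval p a = 0)"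
    (is "_ \<longleftrightarrow> ?rhs")
proof
  assume a: "a \<in> zariski_closure d S"
  have closed: "zariski_closed d {b \<in> aff d. \<forall>q\<in>P. mpeval q b = 0}"
    if "\<forall>q\<in>P. mvars q \<subseteq> {1..d}" for P
    unfolding zariski_closed_def using that by blast
  have "a \<in> aff d"
    using a closed[of "{}"] assms unfolding zariski_closure_def by auto
  moreover have "mpeval p a = 0" if "mvars p \<subseteq> {1..d}" "\<forall>b\<in>S. mpeval p b = 0" for p
    using a closed[of "{p}"] assms that unfolding zariski_closure_def by auto
  ultimately show ?rhs by blast
next
  assume ?rhs
  show "a \<in> zariski_closure d S"
    unfolding zariski_closure_def
  proof (rule InterI)
    fix C assume "C \<in> {C. zariski_closed d C \<and> S \<subseteq> C}"
    then obtain P where P: "\<forall>p\<in>P. mvars p \<subseteq> {1..d}" "C = {b \<in> aff d. \<forall>p\<in>P. mpeval p b = 0}" "S \<subseteq> C"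
      unfolding zariski_closed_def by blast
    have "mpeval p a = 0" if "p \<in> P" for p
    proof -
      have "\<forall>b\<in>S. mpeval p b = 0" using P(2,3) that by blast
      then show ?thesis using \<open>?rhs\<close> P(1) that by blast
    qed
    then show "a \<in> C" using \<open>?rhs\<close> P(2) by blast
  qed
qed

lemma aff_subset_closure_nonzero_locus:
  assumes inf: "infinite (UNIV :: 'k::field set)" and Q: "Q \<noteq> (0 :: 'k mpoly)" "mvars Q \<subseteq> {1..d}"
  shows "aff d \<subseteq> zariski_closure d {a \<in> aff d. mpeval Q a \<noteq> 0}"
proof
  fix a :: "nat \<Rightarrow> 'k" assume "a \<in> aff d"
  moreover have "mpeval p a = 0"
    if "mvars p \<subseteq> {1..d}" "\<forall>b\<in>{a \<in> aff d. mpeval Q a \<noteq> 0}. mpeval p b = 0" for p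
  proof -
    have "p = 0" using mpoly_eq_0_if_vanishes_off_zeros[OF inf Q that(1)] that(2) by blast
    then show ?thesis by simp
  qed
  ultimately show "a \<in> zariski_closure d {a \<in> aff d. mpeval Q a \<noteq> 0}"
    by (subst zariski_closure_iff) blast+
qed

section \<open>Rational functions on a set\<close>

definition rational_on :: "nat set \<Rightarrow> (nat \<Rightarrow> 'k) set \<Rightarrow> ((nat \<Rightarrow> 'k::field) \<Rightarrow> 'k) \<Rightarrow> bool" where
  "rational_on X D f \<longleftrightarrow> (\<exists>P Q. mvars P \<subseteq> X \<and> mvars Q \<subseteq> X \<and>
     (\<forall>a\<in>D. mpeval Q a \<noteq> 0 \<and> f a = mpeval P a / mpeval Q a))"

lemma rational_on_mpeval: "mvars P \<subseteq> X \<Longrightarrow> rational_on X D (mpeval P)"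
  unfolding rational_on_def by (intro exI[of _ P] exI[of _ 1]) (simp add: mvars_def)

lemma rational_on_cong: "rational_on X D f \<Longrightarrow> (\<And>a. a \<in> D \<Longrightarrow> g a = f a) \<Longrightarrow> rational_on X D g"
  unfolding rational_on_def by auto

lemma rational_on_const: "rational_on X D (\<lambda>a. c)"
  by (rule rational_on_cong[OF rational_on_mpeval[of "Const c"]]) simp_all

lemma rational_on_var: "i \<in> X \<Longrightarrow> rational_on X D (\<lambda>a. a i)"
  by (rule rational_on_cong[OF rational_on_mpeval[of "Var i"]]) simp_all

lemma rational_on_add:
  assumes "rational_on X D f" "rational_on X D g"
  shows "rational_on X D (\<lambda>a. f a + g a)"
proof -
  obtain P Q P' Q' where P: "mvars P \<subseteq> X" "mvars Q \<subseteq> X"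
      "\<And>a. a \<in> D \<Longrightarrow> mpeval Q a \<noteq> 0 \<and> f a = mpeval P a / mpeval Q a"
    and P': "mvars P' \<subseteq> X" "mvars Q' \<subseteq> X"
      "\<And>a. a \<in> D \<Longrightarrow> mpeval Q' a \<noteq> 0 \<and> g a = mpeval P' a / mpeval Q' a"
    using assms(1,2) unfolding rational_on_def by metis
  show ?thesis unfolding rational_on_def
  proof (intro exI conjI ballI)
    show "mvars (P * Q' + P' * Q) \<subseteq> X" "mvars (Q * Q') \<subseteq> X"
      using mvars_add[of "P * Q'" "P' * Q"] mvars_mult[of P Q'] mvars_mult[of P' Q] mvars_mult[of Q Q'] P(1,2) P'(1,2) by blast+
    fix a assume a: "a \<in> D"
    show "mpeval (Q * Q') a \<noteq> 0" using P(3)[OF a] P'(3)[OF a] by simp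
    show "f a + g a = mpeval (P * Q' + P' * Q) a / mpeval (Q * Q') a"
      using P(3)[OF a] P'(3)[OF a] by (simp add: field_simps)
  qed
qed

lemma rational_on_mult:
  assumes "rational_on X D f" "rational_on X D g"
  shows "rational_on X D (\<lambda>a. f a * g a)"
proof -
  obtain P Q P' Q' where P: "mvars P \<subseteq> X" "mvars Q \<subseteq> X"
      "\<And>a. a \<in> D \<Longrightarrow> mpeval Q a \<noteq> 0 \<and> f a = mpeval P a / mpeval Q a"
    and P': "mvars P' \<subseteq> X" "mvars Q' \<subseteq> X"
      "\<And>a. a \<in> D \<Longrightarrow> mpeval Q' a \<noteq> 0 \<and> g a = mpeval P' a / mpeval Q' a"
    using assms(1,2) unfolding rational_on_def by metis
  show ?thesis unfolding rational_on_def
  proof (intro exI conjI ballI)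
    show "mvars (P * P') \<subseteq> X" "mvars (Q * Q') \<subseteq> X"
      using mvars_mult[of P P'] mvars_mult[of Q Q'] P(1,2) P'(1,2) by blast+
    fix a assume a: "a \<in> D"
    show "mpeval (Q * Q') a \<noteq> 0" using P(3)[OF a] P'(3)[OF a] by simp
    show "f a * g a = mpeval (P * P') a / mpeval (Q * Q') a"
      using P(3)[OF a] P'(3)[OF a] by simp
  qed
qed

lemma rational_on_divide:
  assumes "rational_on X D f" "rational_on X D g" "\<And>a. a \<in> D \<Longrightarrow> g a \<noteq> 0"
  shows "rational_on X D (\<lambda>a. f a / g a)"
proof -
  obtain P Q P' Q' where P: "mvars P \<subseteq> X" "mvars Q \<subseteq> X"
      "\<And>a. a \<in> D \<Longrightarrow> mpeval Q a \<noteq> 0 \<and> f a = mpeval P a / mpeval Q a"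
    and P': "mvars P' \<subseteq> X" "mvars Q' \<subseteq> X"
      "\<And>a. a \<in> D \<Longrightarrow> mpeval Q' a \<noteq> 0 \<and> g a = mpeval P' a / mpeval Q' a"
    using assms(1,2) unfolding rational_on_def by metis
  show ?thesis unfolding rational_on_def
  proof (intro exI conjI ballI)
    show "mvars (P * Q') \<subseteq> X" "mvars (Q * P') \<subseteq> X"
      using mvars_mult[of P Q'] mvars_mult[of Q P'] P(1,2) P'(1,2) by blast+
    fix a assume a: "a \<in> D"
    show "mpeval (Q * P') a \<noteq> 0" using P(3)[OF a] P'(3)[OF a] assms(3)[OF a] by simp
    show "f a / g a = mpeval (P * Q') a / mpeval (Q * P') a"
      using P(3)[OF a] P'(3)[OF a] by simp
  qed
qed

lemma rational_on_sum:
  "finite A \<Longrightarrow> (\<And>x. x \<in> A \<Longrightarrow> rational_on X D (f x)) \<Longrightarrow> rational_on X D (\<lambda>a. \<Sum>x\<in>A. f x a)"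
  by (induction A rule: finite_induct) (auto intro: rational_on_add rational_on_const)

lemma rational_on_prod:
  "finite A \<Longrightarrow> (\<And>x. x \<in> A \<Longrightarrow> rational_on X D (f x)) \<Longrightarrow> rational_on X D (\<lambda>a. \<Prod>x\<in>A. f x a)"
  by (induction A rule: finite_induct) (auto intro: rational_on_mult rational_on_const)

lemma rational_on_power: "rational_on X D f \<Longrightarrow> rational_on X D (\<lambda>a. f a ^ e)"
  by (induction e) (auto intro: rational_on_mult rational_on_const)

lemma rational_on_mpeval_comp:
  assumes "\<And>i. i \<in> mvars P \<Longrightarrow> rational_on X D (f i)"
  shows "rational_on X D (\<lambda>a. mpeval P (\<lambda>i. f i a))"
  unfolding mpeval_def
  by (intro rational_on_sum rational_on_mult rational_on_const rational_on_prod rational_on_power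
      finite_keys assms) (auto simp: mvars_def)

lemma rational_on_vanishes_on_closure:
  assumes f: "rational_on {1..d} D f" and S: "S \<subseteq> D" "S \<subseteq> aff d" "D \<subseteq> zariski_closure d S"
    and vanish: "\<forall>a\<in>S. f a = 0"
  shows "\<forall>a\<in>D. f a = 0"
proof
  fix a assume a: "a \<in> D"
  obtain P Q where PQ: "mvars P \<subseteq> {1..d}" "\<forall>a\<in>D. mpeval Q a \<noteq> 0 \<and> f a = mpeval P a / mpeval Q a"
    using f unfolding rational_on_def by blast
  have "\<forall>b\<in>S. mpeval P b = 0" using PQ(2) S(1) vanish by fastforce
  then have "mpeval P a = 0"
    using a S(3) PQ(1) zariski_closure_iff[OF S(2)] by blast
  then show "f a = 0" using PQ(2) a by simp
qed

lemma ideal_gen_0: "0 \<in> ideal_gen F"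
  unfolding ideal_gen_def by (rule CollectI, rule exI[of _ "{}"]) auto

lemma ideal_gen_base: "f \<in> F \<Longrightarrow> f \<in> ideal_gen F"
  unfolding ideal_gen_def by (rule CollectI, rule exI[of _ "{f}"], rule exI[of _ "\<lambda>_. 1"]) auto

lemma ideal_gen_add:
  assumes "p \<in> ideal_gen F" "q \<in> ideal_gen F"
  shows "p + q \<in> ideal_gen F"
proof -
  obtain S c where S: "finite S" "S \<subseteq> F" "p = (\<Sum>f\<in>S. c f * f)"
    using assms(1) unfolding ideal_gen_def by blast
  obtain S' c' where S': "finite S'" "S' \<subseteq> F" "q = (\<Sum>f\<in>S'. c' f * f)"
    using assms(2) unfolding ideal_gen_def by blast
  have fin: "finite (S \<union> S')" using S S' by auto
  have "p = (\<Sum>f\<in>S \<union> S'. (if f \<in> S then c f else 0) * f)"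
    unfolding S(3) by (rule sum.mono_neutral_cong_left[OF fin]) auto
  moreover have "q = (\<Sum>f\<in>S \<union> S'. (if f \<in> S' then c' f else 0) * f)"
    unfolding S'(3) by (rule sum.mono_neutral_cong_left[OF fin]) auto
  ultimately have "p + q = (\<Sum>f\<in>S \<union> S'. ((if f \<in> S then c f else 0) + (if f \<in> S' then c' f else 0)) * f)"
    by (simp add: sum.distrib[symmetric] distrib_right)
  then show ?thesis unfolding ideal_gen_def using fin S(2) S'(2) by (intro CollectI exI[of _ "S \<union> S'"]) auto
qed

lemma ideal_gen_mult:
  assumes "p \<in> ideal_gen F"
  shows "r * p \<in> ideal_gen F"
proof -
  obtain S c where S: "finite S" "S \<subseteq> F" "p = (\<Sum>f\<in>S. c f * f)"
    using assms unfolding ideal_gen_def by blast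
  then have "r * p = (\<Sum>f\<in>S. (r * c f) * f)"
    by (simp add: sum_distrib_left mult.assoc)
  then show ?thesis unfolding ideal_gen_def using S(1,2) by (intro CollectI exI[of _ S]) auto
qed

lemma ideal_gen_diff:
  "p \<in> ideal_gen F \<Longrightarrow> q \<in> ideal_gen F \<Longrightarrow> p - q \<in> ideal_gen (F :: 'k::comm_ring_1 mpoly set)"
  using ideal_gen_add[OF _ ideal_gen_mult[of q F "-1"], of p] by simp

lemma mpeval_ideal_gen_eq_0:
  assumes "p \<in> ideal_gen F" "\<forall>f\<in>F. mpeval f a = 0"
  shows "mpeval p a = 0"
proof -
  obtain S c where "S \<subseteq> F" "p = (\<Sum>f\<in>S. c f * f)"
    using assms(1) unfolding ideal_gen_def by blast
  then show ?thesis using assms(2) by (auto intro!: sum.neutral)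
qed

definition cong_mod :: "'k::comm_ring_1 mpoly set \<Rightarrow> 'k mpoly \<Rightarrow> 'k mpoly \<Rightarrow> bool" where
  "cong_mod F x y \<longleftrightarrow> x - y \<in> ideal_gen F"

lemma cong_mod_refl: "cong_mod F x x"
  unfolding cong_mod_def by (simp add: ideal_gen_0)

lemma cong_mod_sym: "cong_mod F x y \<Longrightarrow> cong_mod F y x"
  unfolding cong_mod_def using ideal_gen_mult[of "x - y" F "-1"] by simp

lemma cong_mod_add: "cong_mod F a b \<Longrightarrow> cong_mod F c d \<Longrightarrow> cong_mod F (a + c) (b + d)"
  unfolding cong_mod_def using ideal_gen_add[of "a - b" F "c - d"] by (simp add: algebra_simps)

lemma cong_mod_mult: "cong_mod F a b \<Longrightarrow> cong_mod F c d \<Longrightarrow> cong_mod F (a * c) (b * d)"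
  unfolding cong_mod_def
  using ideal_gen_add[OF ideal_gen_mult[of "c - d" F a] ideal_gen_mult[of "a - b" F d]]
  by (simp add: algebra_simps)

lemma cong_mod_power: "cong_mod F a b \<Longrightarrow> cong_mod F (a ^ e) (b ^ e)"
  by (induction e) (auto intro: cong_mod_mult cong_mod_refl)

lemma cong_mod_ideal_gen_iff: "cong_mod F x y \<Longrightarrow> x \<in> ideal_gen F \<longleftrightarrow> y \<in> ideal_gen F"
  unfolding cong_mod_def using ideal_gen_diff[of x F "x - y"] ideal_gen_add[of "x - y" F y] by auto

lemma cong_mod_mpeval:
  "cong_mod F x y \<Longrightarrow> \<forall>f\<in>F. mpeval f a = 0 \<Longrightarrow> mpeval x a = mpeval y a"
  unfolding cong_mod_def using mpeval_ideal_gen_eq_0[of "x - y" F a] by simp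

definition power_clears :: "'k::comm_ring_1 mpoly set \<Rightarrow> 'k mpoly \<Rightarrow> nat set \<Rightarrow> 'k mpoly \<Rightarrow> bool" where
  "power_clears F H X x \<longleftrightarrow> (\<exists>D R. mvars R \<subseteq> X \<and> cong_mod F (H ^ D * x) R)"

lemma power_clears_of_vars: "mvars x \<subseteq> X \<Longrightarrow> power_clears F H X x"
  unfolding power_clears_def by (intro exI[of _ 0] exI[of _ x]) (simp add: cong_mod_refl)

lemma power_clears_add:
  assumes H: "mvars H \<subseteq> X" and "power_clears F H X x" "power_clears F H X y"
  shows "power_clears F H X (x + y)"
proof -
  obtain D R D' R' where R: "mvars R \<subseteq> X" "cong_mod F (H ^ D * x) R"
    and R': "mvars R' \<subseteq> X" "cong_mod F (H ^ D' * y) R'"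
    using assms(2,3) unfolding power_clears_def by blast
  have "cong_mod F (H ^ D' * (H ^ D * x) + H ^ D * (H ^ D' * y)) (H ^ D' * R + H ^ D * R')"
    by (intro cong_mod_add cong_mod_mult cong_mod_refl R(2) R'(2))
  moreover have "H ^ D' * (H ^ D * x) + H ^ D * (H ^ D' * y) = H ^ (D + D') * (x + y)"
    by (simp add: algebra_simps power_add)
  moreover have "mvars (H ^ D' * R + H ^ D * R') \<subseteq> X"
    using mvars_add mvars_mult mvars_power H R(1) R'(1) by blast
  ultimately show ?thesis unfolding power_clears_def by (intro exI[of _ "D + D'"]) auto
qed

lemma power_clears_mult:
  assumes "power_clears F H X x" "power_clears F H X y"
  shows "power_clears F H X (x * y)"
proof -
  obtain D R D' R' where R: "mvars R \<subseteq> X" "cong_mod F (H ^ D * x) R"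
    and R': "mvars R' \<subseteq> X" "cong_mod F (H ^ D' * y) R'"
    using assms unfolding power_clears_def by blast
  have "cong_mod F ((H ^ D * x) * (H ^ D' * y)) (R * R')"
    by (intro cong_mod_mult R(2) R'(2))
  moreover have "(H ^ D * x) * (H ^ D' * y) = H ^ (D + D') * (x * y)"
    by (simp add: algebra_simps power_add)
  moreover have "mvars (R * R') \<subseteq> X"
    using mvars_mult R(1) R'(1) by blast
  ultimately show ?thesis unfolding power_clears_def by (intro exI[of _ "D + D'"]) auto
qed

lemma Var_power: "Var i ^ e = Poly_Mapping.single (Poly_Mapping.single i e) (1::'k::comm_ring_1)"
  by (induction e) (auto simp: Var_def mult_single single_add[symmetric])

lemma mpoly_eq_sum_monomials:
  "p = (\<Sum>m\<in>Poly_Mapping.keys p. Const (Poly_Mapping.lookup p m) *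
          (\<Prod>i\<in>Poly_Mapping.keys m. Var i ^ Poly_Mapping.lookup m i :: 'k::comm_ring_1 mpoly))"
proof -
  have prod_single: "(\<Prod>i\<in>A. Poly_Mapping.single (f i) (1::'k)) = Poly_Mapping.single (\<Sum>i\<in>A. f i) 1"
    if "finite A" for A and f :: "nat \<Rightarrow> nat \<Rightarrow>\<^sub>0 nat"
    using that by (induction A rule: finite_induct) (auto simp: mult_single)
  have "(\<Prod>i\<in>Poly_Mapping.keys m. Var i ^ Poly_Mapping.lookup m i :: 'k mpoly) = Poly_Mapping.single m 1" for m
  proof -
    have "(\<Prod>i\<in>Poly_Mapping.keys m. Var i ^ Poly_Mapping.lookup m i :: 'k mpoly) =
        Poly_Mapping.single (\<Sum>i\<in>Poly_Mapping.keys m. Poly_Mapping.single i (Poly_Mapping.lookup m i)) 1"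
      by (simp add: Var_power prod_single)
    then show ?thesis by (simp add: poly_mapping_sum_single)
  qed
  then show ?thesis
    by (simp add: Const_def mult_single poly_mapping_sum_single)
qed

lemma mpoly_induct [case_names Const Var add mult]:
  fixes p :: "'k::comm_ring_1 mpoly"
  assumes Const: "\<And>c. Q (Const c)" and Var: "\<And>i. i \<in> mvars p \<Longrightarrow> Q (Var i)"
    and add: "\<And>x y. Q x \<Longrightarrow> Q y \<Longrightarrow> Q (x + y)" and mult: "\<And>x y. Q x \<Longrightarrow> Q y \<Longrightarrow> Q (x * y)"
  shows "Q p"
proof -
  have zero: "Q 0" and one: "Q 1" using Const[of 0] Const[of 1] by (simp_all add: Const_def)
  have sum: "Q (sum f A)" if "finite A" "\<And>x. x \<in> A \<Longrightarrow> Q (f x)" for A and f :: "_ \<Rightarrow> _ mpoly"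
    using that by (induction A rule: finite_induct) (auto intro: add zero)
  have prod: "Q (prod f A)" if "finite A" "\<And>x. x \<in> A \<Longrightarrow> Q (f x)" for A and f :: "_ \<Rightarrow> _ mpoly"
    using that by (induction A rule: finite_induct) (auto intro: mult one)
  have power: "Q (x ^ e)" if "Q x" for x e
    using that by (induction e) (auto intro: mult one)
  show ?thesis
    by (subst mpoly_eq_sum_monomials, intro sum mult Const prod power finite_keys Var)
       (auto simp: mvars_def)
qed

lemma mpoly_rename_vars:
  fixes P :: "'k::comm_ring_1 mpoly"
  obtains q where "mvars q \<subseteq> \<sigma> ` mvars P" "\<And>v. mpeval q v = mpeval P (\<lambda>i. v (\<sigma> i))"
proof -
  define R where "R x \<longleftrightarrow> (\<exists>q. mvars q \<subseteq> \<sigma> ` mvars P \<and> (\<forall>v. mpeval q v = mpeval x (\<lambda>i. v (\<sigma> i))))"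
    for x :: "'k mpoly"
  have "R P"
  proof (induction rule: mpoly_induct[where p = P])
    case (Const c)
    show ?case unfolding R_def by (intro exI[of _ "Const c"]) simp
  next
    case (Var i)
    then show ?case unfolding R_def by (intro exI[of _ "Var (\<sigma> i)"]) simp
  next
    case (add x y)
    then obtain qx qy where "mvars qx \<subseteq> \<sigma> ` mvars P" "\<forall>v. mpeval qx v = mpeval x (\<lambda>i. v (\<sigma> i))"
      "mvars qy \<subseteq> \<sigma> ` mvars P" "\<forall>v. mpeval qy v = mpeval y (\<lambda>i. v (\<sigma> i))"
      unfolding R_def by blast
    then show ?case unfolding R_def using mvars_add[of qx qy] by (intro exI[of _ "qx + qy"]) auto
  next
    case (mult x y)
    then obtain qx qy where "mvars qx \<subseteq> \<sigma> ` mvars P" "\<forall>v. mpeval qx v = mpeval x (\<lambda>i. v (\<sigma> i))"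
      "mvars qy \<subseteq> \<sigma> ` mvars P" "\<forall>v. mpeval qy v = mpeval y (\<lambda>i. v (\<sigma> i))"
      unfolding R_def by blast
    then show ?case unfolding R_def using mvars_mult[of qx qy] by (intro exI[of _ "qx * qy"]) auto
  qed
  then show thesis using that unfolding R_def by blast
qed

lemma mpoly_shift_vars:
  assumes "mvars P \<subseteq> {1..n}"
  obtains q where "mvars q \<subseteq> {m+1..m+n}" "\<And>v. mpeval q (zpoint m v) = mpeval P v"
proof -
  obtain q where q: "mvars q \<subseteq> (\<lambda>i. m + i) ` mvars P" "\<And>v. mpeval q v = mpeval P (\<lambda>i. v (m + i))"
    using mpoly_rename_vars[where \<sigma> = "\<lambda>i. m + i" and P = P] by blast
  have "mpeval q (zpoint m v) = mpeval P v" for v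
    unfolding q(2) by (rule mpeval_cong) (use assms in \<open>auto simp: zpoint_def\<close>)
  moreover have "mvars q \<subseteq> {m+1..m+n}" using q(1) assms by fastforce
  ultimately show thesis using that by blast
qed

lemma mpoly_unshift_vars:
  assumes "mvars q \<subseteq> {m+1..m+n}"
  obtains P where "mvars P \<subseteq> {1..n}" "\<And>v. mpeval P v = mpeval q (zpoint m v)"
proof -
  obtain P where P: "mvars P \<subseteq> (\<lambda>i. i - m) ` mvars q" "\<And>v. mpeval P v = mpeval q (\<lambda>i. v (i - m))"
    using mpoly_rename_vars[where \<sigma> = "\<lambda>i. i - m" and P = q] by blast
  have "mpeval P v = mpeval q (zpoint m v)" for v
    unfolding P(2) by (rule mpeval_cong) (use assms in \<open>auto simp: zpoint_def\<close>)
  moreover have "mvars P \<subseteq> {1..n}" using P(1) assms by fastforce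
  ultimately show thesis using that by blast
qed

lemma zariski_closure_iff_shifted:
  assumes "S \<subseteq> aff n"
  shows "v \<in> zariski_closure n S \<longleftrightarrow> v \<in> aff n \<and>
    (\<forall>q. mvars q \<subseteq> {m+1..m+n} \<longrightarrow> (\<forall>w\<in>S. mpeval q (zpoint m w) = 0) \<longrightarrow> mpeval q (zpoint m v) = 0)"
proof -
  have "(\<forall>P. mvars P \<subseteq> {1..n} \<longrightarrow> (\<forall>w\<in>S. mpeval P w = 0) \<longrightarrow> mpeval P v = 0) \<longleftrightarrow>
    (\<forall>q. mvars q \<subseteq> {m+1..m+n} \<longrightarrow> (\<forall>w\<in>S. mpeval q (zpoint m w) = 0) \<longrightarrow> mpeval q (zpoint m v) = 0)"
  proof (intro iffI allI impI)
    fix q assume "\<forall>P. mvars P \<subseteq> {1..n} \<longrightarrow> (\<forall>w\<in>S. mpeval P w = 0) \<longrightarrow> mpeval P v = 0"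
      and "mvars q \<subseteq> {m+1..m+n}" "\<forall>w\<in>S. mpeval q (zpoint m w) = 0"
    then show "mpeval q (zpoint m v) = 0" by (metis mpoly_unshift_vars)
  next
    fix P assume "\<forall>q. mvars q \<subseteq> {m+1..m+n} \<longrightarrow> (\<forall>w\<in>S. mpeval q (zpoint m w) = 0) \<longrightarrow> mpeval q (zpoint m v) = 0"
      and "mvars P \<subseteq> {1..n}" "\<forall>w\<in>S. mpeval P w = 0"
    then show "mpeval P v = 0" by (metis mpoly_shift_vars)
  qed
  then show ?thesis using zariski_closure_iff[OF assms] by simp
qed

section \<open>Elimination with Gr\<ouml>bner bases\<close>

lemma
  assumes "monomial_order ord"
  shows monomial_order_antisym: "ord s t \<Longrightarrow> ord t s \<Longrightarrow> s = t"
    and monomial_order_trans: "ord s t \<Longrightarrow> ord t u \<Longrightarrow> ord s u"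
    and monomial_order_total: "ord s t \<or> ord t s"
    and monomial_order_add_right: "ord s t \<Longrightarrow> ord (s + u) (t + u)"
    and monomial_order_wf: "wfP (\<lambda>s t. ord s t \<and> s \<noteq> t)"
  using assms unfolding monomial_order_def by blast+

lemma finite_total_has_max:
  assumes "finite K" "K \<noteq> {}"
    and total: "\<And>s t. ord s t \<or> ord t s" and trans: "\<And>s t u. ord s t \<Longrightarrow> ord t u \<Longrightarrow> ord s u"
  shows "\<exists>x\<in>K. \<forall>y\<in>K. ord y x"
  using assms(1,2)
proof (induction K rule: finite_ne_induct)
  case (singleton x)
  have "ord x x" using total[of x x] by simp
  then show ?case by simp
next
  case (insert x F)
  then obtain y where y: "y \<in> F" "\<forall>z\<in>F. ord z y" by blast
  show ?case
  proof (cases "ord x y")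
    case True
    then show ?thesis using y by auto
  next
    case False
    then have "ord y x" using total[of x y] by simp
    then have "\<forall>z\<in>F. ord z x" using y(2) trans by blast
    moreover have "ord x x" using total[of x x] by simp
    ultimately show ?thesis by auto
  qed
qed

lemma
  assumes mo: "monomial_order ord" and "p \<noteq> 0"
  shows lead_mon_in_keys: "lead_mon ord p \<in> Poly_Mapping.keys p"
    and lead_mon_max: "m \<in> Poly_Mapping.keys p \<Longrightarrow> ord m (lead_mon ord p)"
proof -
  have "Poly_Mapping.keys p \<noteq> {}" using \<open>p \<noteq> 0\<close> by simp
  from finite_total_has_max[OF finite_keys this, of ord] monomial_order_total[OF mo] monomial_order_trans[OF mo]
  obtain x where x: "x \<in> Poly_Mapping.keys p" "\<forall>y\<in>Poly_Mapping.keys p. ord y x"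
    by blast
  have "\<exists>!m. m \<in> Poly_Mapping.keys p \<and> (\<forall>m'\<in>Poly_Mapping.keys p. ord m' m)"
  proof (rule ex1I[of _ x])
    fix y assume "y \<in> Poly_Mapping.keys p \<and> (\<forall>m'\<in>Poly_Mapping.keys p. ord m' y)"
    then show "y = x" using x monomial_order_antisym[OF mo, of x y] by blast
  qed (use x in blast)
  then have "lead_mon ord p \<in> Poly_Mapping.keys p \<and> (\<forall>m'\<in>Poly_Mapping.keys p. ord m' (lead_mon ord p))"
    unfolding lead_mon_def by (rule theI')
  then show "lead_mon ord p \<in> Poly_Mapping.keys p" "m \<in> Poly_Mapping.keys p \<Longrightarrow> ord m (lead_mon ord p)"
    by blast+
qed

lemma lookup_single_mult:
  "Poly_Mapping.lookup (Poly_Mapping.single u c * g) (u + x) = c * Poly_Mapping.lookup (g :: 'k::comm_ring_1 mpoly) x"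
proof -
  have "Poly_Mapping.single u c * g =
      (\<Sum>m\<in>Poly_Mapping.keys g. Poly_Mapping.single (u + m) (c * Poly_Mapping.lookup g m))"
    by (subst (1) poly_mapping_sum_single[of g, symmetric]) (simp add: sum_distrib_left mult_single)
  then show ?thesis
    by (cases "x \<in> Poly_Mapping.keys g") (auto simp: lookup_sum lookup_single when_def in_keys_iff)
qed

lemma keys_single_mult:
  "Poly_Mapping.keys (Poly_Mapping.single u c * (g :: 'k::comm_ring_1 mpoly)) \<subseteq> (\<lambda>x. u + x) ` Poly_Mapping.keys g"
  using keys_mult[of "Poly_Mapping.single u c" g] by (auto split: if_splits)

lemma lead_mon_reduction_less:
  fixes p g :: "'k::field mpoly" and u :: "nat \<Rightarrow>\<^sub>0 nat" and ord
  defines "r \<equiv> p - Poly_Mapping.single u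
      (Poly_Mapping.lookup p (lead_mon ord p) / Poly_Mapping.lookup g (lead_mon ord g)) * g"
  assumes mo: "monomial_order ord" and "p \<noteq> 0" "g \<noteq> 0" "r \<noteq> 0"
    and u: "lead_mon ord p = lead_mon ord g + u"
  shows "ord (lead_mon ord r) (lead_mon ord p)" "lead_mon ord r \<noteq> lead_mon ord p"
proof -
  let ?c = "Poly_Mapping.lookup p (lead_mon ord p) / Poly_Mapping.lookup g (lead_mon ord g)"
  have "Poly_Mapping.lookup g (lead_mon ord g) \<noteq> 0"
    using lead_mon_in_keys[OF mo \<open>g \<noteq> 0\<close>] by (simp add: in_keys_iff)
  moreover have "lead_mon ord p = u + lead_mon ord g" using u by (simp add: add.commute)
  then have "Poly_Mapping.lookup (Poly_Mapping.single u ?c * g) (lead_mon ord p) =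
      ?c * Poly_Mapping.lookup g (lead_mon ord g)"
    by (simp only: lookup_single_mult)
  ultimately have "Poly_Mapping.lookup r (lead_mon ord p) = 0"
    unfolding r_def lookup_minus by simp
  then show "lead_mon ord r \<noteq> lead_mon ord p"
    using lead_mon_in_keys[OF mo \<open>r \<noteq> 0\<close>] by (auto simp: in_keys_iff)
  have "lead_mon ord r \<in> Poly_Mapping.keys p \<union> Poly_Mapping.keys (Poly_Mapping.single u ?c * g)"
    using lead_mon_in_keys[OF mo \<open>r \<noteq> 0\<close>] keys_diff[of p "Poly_Mapping.single u ?c * g"]
    unfolding r_def by blast
  then show "ord (lead_mon ord r) (lead_mon ord p)"
  proof
    assume "lead_mon ord r \<in> Poly_Mapping.keys p"
    then show ?thesis using lead_mon_max[OF mo \<open>p \<noteq> 0\<close>] by blast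
  next
    assume "lead_mon ord r \<in> Poly_Mapping.keys (Poly_Mapping.single u ?c * g)"
    then obtain x where x: "x \<in> Poly_Mapping.keys g" "lead_mon ord r = u + x"
      using keys_single_mult by blast
    then have "ord (x + u) (lead_mon ord g + u)"
      using lead_mon_max[OF mo \<open>g \<noteq> 0\<close>] monomial_order_add_right[OF mo] by blast
    then show ?thesis using x u by (simp add: add.commute)
  qed
qed

lemma elimination_order_vars_disjoint:
  assumes "elimination_order ord X" "g \<noteq> 0" "Poly_Mapping.keys (lead_mon ord g) \<inter> X = {}"
  shows "mvars g \<inter> X = {}"
  using assms lead_mon_max[of ord g] unfolding elimination_order_def mvars_def by blast

lemma groebner_basis_reducer:
  fixes Gb F :: "'k::comm_ring_1 mpoly set"
  assumes eo: "elimination_order ord X" and GB: "is_groebner_basis ord Vs Gb F"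
    and p: "p \<in> ideal_gen F" "p \<noteq> 0" "mvars p \<subseteq> Vs - X"
  obtains g u where "g \<in> Gb" "g \<noteq> 0" "mvars g \<subseteq> Vs - X" "Poly_Mapping.keys u \<subseteq> Vs - X"
    "lead_mon ord p = lead_mon ord g + u"
proof -
  have mo: "monomial_order ord" using eo unfolding elimination_order_def by blast
  obtain g u where g: "g \<in> Gb" "g \<noteq> 0" and u: "lead_mon ord p = lead_mon ord g + u"
    using GB p unfolding is_groebner_basis_def mon_dvd_def by blast
  have "Poly_Mapping.keys (lead_mon ord p) \<subseteq> Vs - X"
    using lead_mon_in_keys[OF mo p(2)] p(3) unfolding mvars_def by blast
  then have lead_g_vars: "Poly_Mapping.keys (lead_mon ord g) \<subseteq> Vs - X"
    and u_vars: "Poly_Mapping.keys u \<subseteq> Vs - X"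
    using u keys_add_nat by auto
  have "mvars g \<inter> X = {}"
    using elimination_order_vars_disjoint[OF eo g(2)] lead_g_vars by blast
  moreover have "mvars g \<subseteq> Vs" using GB g(1) unfolding is_groebner_basis_def by blast
  ultimately show thesis using that g u u_vars by blast
qed

lemma groebner_basis_eliminant_vanishes:
  fixes Gb F :: "'k::field mpoly set"
  assumes eo: "elimination_order ord X" and GB: "is_groebner_basis ord Vs Gb F"
    and vanish: "\<forall>q\<in>Gb. mvars q \<subseteq> Vs - X \<longrightarrow> mpeval q c = 0"
  shows "p \<in> ideal_gen F \<Longrightarrow> mvars p \<subseteq> Vs - X \<Longrightarrow> mpeval p c = 0"
proof -
  have mo: "monomial_order ord" using eo unfolding elimination_order_def by blast
  have Gb_ideal: "Gb \<subseteq> ideal_gen F"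
    using GB ideal_gen_base unfolding is_groebner_basis_def by blast
  have "\<forall>p. lead_mon ord p = t \<longrightarrow> p \<in> ideal_gen F \<longrightarrow> mvars p \<subseteq> Vs - X \<longrightarrow> mpeval p c = 0" for t
    using monomial_order_wf[OF mo]
  proof (induction t rule: wfp_induct_rule)
    case (less t)
    show ?case
    proof (intro allI impI)
      fix p assume t: "lead_mon ord p = t" and p: "p \<in> ideal_gen F" "mvars p \<subseteq> Vs - X"
      show "mpeval p c = 0"
      proof (cases "p = 0")
        case False
        obtain g u where g: "g \<in> Gb" "g \<noteq> 0" "mvars g \<subseteq> Vs - X" "Poly_Mapping.keys u \<subseteq> Vs - X"
          and u: "lead_mon ord p = lead_mon ord g + u"
          by (rule groebner_basis_reducer[OF eo GB p(1) False p(2)])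
        define r where "r = p - Poly_Mapping.single u
          (Poly_Mapping.lookup p (lead_mon ord p) / Poly_Mapping.lookup g (lead_mon ord g)) * g"
        have "r \<in> ideal_gen F"
          unfolding r_def using g(1) Gb_ideal by (intro ideal_gen_diff p(1) ideal_gen_mult) blast
        moreover have "mvars r \<subseteq> Vs - X"
        proof -
          have "mvars (Poly_Mapping.single u a) \<subseteq> Vs - X" for a :: 'k
            using g(4) by (auto simp: mvars_def)
          then show ?thesis
            using mvars_diff mvars_mult p(2) g(3) unfolding r_def by blast
        qed
        moreover have "mpeval r c = mpeval p c"
          unfolding r_def using vanish g(1,3) by simp
        moreover have "ord (lead_mon ord r) (lead_mon ord p) \<and> lead_mon ord r \<noteq> lead_mon ord p"
          if "r \<noteq> 0"
          using lead_mon_reduction_less[OF mo False g(2) _ u] that unfolding r_def by blast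
        ultimately show ?thesis
          using less.IH t by (cases "r = 0") auto
      qed simp
    qed
  qed
  then show "p \<in> ideal_gen F \<Longrightarrow> mvars p \<subseteq> Vs - X \<Longrightarrow> mpeval p c = 0" by blast
qed

lemma groebner_basis_eliminants_vanish_iff:
  fixes Gb F :: "'k::field mpoly set"
  assumes eo: "elimination_order ord X" and GB: "is_groebner_basis ord Vs Gb F"
  shows "(\<forall>q\<in>Gb. mvars q \<subseteq> Vs - X \<longrightarrow> mpeval q c = 0) \<longleftrightarrow>
    (\<forall>q\<in>ideal_gen F. mvars q \<subseteq> Vs - X \<longrightarrow> mpeval q c = 0)"
proof
  assume "\<forall>q\<in>Gb. mvars q \<subseteq> Vs - X \<longrightarrow> mpeval q c = 0"
  then show "\<forall>q\<in>ideal_gen F. mvars q \<subseteq> Vs - X \<longrightarrow> mpeval q c = 0"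
    using groebner_basis_eliminant_vanishes[OF eo GB] by blast
next
  have "Gb \<subseteq> ideal_gen F"
    using GB ideal_gen_base unfolding is_groebner_basis_def by blast
  then show "\<forall>q\<in>Gb. mvars q \<subseteq> Vs - X \<longrightarrow> mpeval q c = 0"
    if "\<forall>q\<in>ideal_gen F. mvars q \<subseteq> Vs - X \<longrightarrow> mpeval q c = 0"
    using that by blast
qed

section \<open>The graph of the fraction map\<close>

definition denom_domain :: "nat \<Rightarrow> nat \<Rightarrow> (nat \<Rightarrow> 'k::field mpoly) \<Rightarrow> (nat \<Rightarrow> 'k) set" where
  "denom_domain M n h = {a \<in> aff M. \<forall>p\<in>{1..n}. mpeval (h p) a \<noteq> 0}"

definition frac_map :: "nat \<Rightarrow> (nat \<Rightarrow> 'k::field mpoly) \<Rightarrow> (nat \<Rightarrow> 'k mpoly) \<Rightarrow> (nat \<Rightarrow> 'k) \<Rightarrow> nat \<Rightarrow> 'k" where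
  "frac_map n g h a = (\<lambda>p. if 1 \<le> p \<and> p \<le> n then mpeval (g p) a / mpeval (h p) a else 0)"

definition graph_gens :: "nat \<Rightarrow> nat \<Rightarrow> (nat \<Rightarrow> 'k::comm_ring_1 mpoly) \<Rightarrow> (nat \<Rightarrow> 'k mpoly) \<Rightarrow> 'k mpoly set" where
  "graph_gens M n g h = (\<lambda>p. h p * Var (M + p) - g p) ` {1..n} \<union> {1 - (\<Prod>p=1..n. h p) * Var 0}"

definition graph_point :: "nat \<Rightarrow> nat \<Rightarrow> (nat \<Rightarrow> 'k::field mpoly) \<Rightarrow> (nat \<Rightarrow> 'k mpoly) \<Rightarrow> (nat \<Rightarrow> 'k) \<Rightarrow> nat \<Rightarrow> 'k" where
  "graph_point M n g h a = (\<lambda>i. if i = 0 then 1 / (\<Prod>p=1..n. mpeval (h p) a) else if i \<le> M then a i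
      else if i \<le> M + n then frac_map n g h a (i - M) else 0)"

lemma mpeval_graph_point_low:
  "mvars R \<subseteq> {1..M} \<Longrightarrow> mpeval R (graph_point M n g h a) = mpeval R a"
  by (rule mpeval_cong) (auto simp: graph_point_def)

lemma mpeval_graph_point_high:
  "mvars q \<subseteq> {M+1..M+n} \<Longrightarrow> mpeval q (graph_point M n g h a) = mpeval q (zpoint M (frac_map n g h a))"
  by (rule mpeval_cong) (auto simp: graph_point_def zpoint_def frac_map_def)

lemma graph_gens_vanish_at_graph_point:
  assumes hv: "\<forall>p\<in>{1..n}. mvars (h p) \<subseteq> {1..M}" and gv: "\<forall>p\<in>{1..n}. mvars (g p) \<subseteq> {1..M}"
    and a: "\<forall>p\<in>{1..n}. mpeval (h p) a \<noteq> 0"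
  shows "\<forall>f\<in>graph_gens M n g h. mpeval f (graph_point M n g h a) = 0"
proof
  fix f assume "f \<in> graph_gens M n g h"
  then consider p where "p \<in> {1..n}" "f = h p * Var (M + p) - g p" | "f = 1 - (\<Prod>p=1..n. h p) * Var 0"
    unfolding graph_gens_def by blast
  then show "mpeval f (graph_point M n g h a) = 0"
  proof cases
    case 1
    then have "graph_point M n g h a (M + p) = mpeval (g p) a / mpeval (h p) a"
      by (auto simp: graph_point_def frac_map_def)
    moreover have "mvars (h p) \<subseteq> {1..M}" "mvars (g p) \<subseteq> {1..M}" using 1 hv gv by auto
    then have "mpeval (h p) (graph_point M n g h a) = mpeval (h p) a"
      and "mpeval (g p) (graph_point M n g h a) = mpeval (g p) a"
      by (simp_all add: mpeval_graph_point_low)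
    ultimately show ?thesis using 1 a by simp
  next
    case 2
    have "mpeval (\<Prod>p=1..n. h p) (graph_point M n g h a) = (\<Prod>p=1..n. mpeval (h p) a)"
      using hv by (force intro!: prod.cong mpeval_graph_point_low)
    then show ?thesis using 2 a by (simp add: graph_point_def)
  qed
qed

text \<open>Modulo the generated ideal, \<open>t\<close> inverts \<open>H = h\<^sub>1\<cdots>h\<^sub>n\<close> and \<open>H z\<^sub>p\<close> is congruent to \<open>g\<^sub>p\<close> times
  the product of the other \<open>h\<^sub>p\<^sub>'\<close>, so multiplying by a power of \<open>H\<close> eliminates \<open>t\<close> and the \<open>z\<^sub>p\<close>.\<close>

lemma graph_ideal_clears_denominators:
  fixes g h :: "nat \<Rightarrow> 'k::comm_ring_1 mpoly"
  assumes hv: "\<forall>p\<in>{1..n}. mvars (h p) \<subseteq> {1..M}" and gv: "\<forall>p\<in>{1..n}. mvars (g p) \<subseteq> {1..M}"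
    and q: "mvars q \<subseteq> {0..M + n}"
  shows "power_clears (graph_gens M n g h) (\<Prod>p=1..n. h p) {1..M} q"
proof -
  let ?F = "graph_gens M n g h" and ?H = "\<Prod>p=1..n. h p"
  have H_vars: "mvars ?H \<subseteq> {1..M}" using mvars_prod[of h "{1..n}"] hv by blast
  show ?thesis
  proof (induction rule: mpoly_induct[where p = q])
    case (Const c)
    show ?case by (intro power_clears_of_vars) simp
  next
    case (add x y)
    then show ?case by (rule power_clears_add[OF H_vars])
  next
    case (mult x y)
    then show ?case by (rule power_clears_mult)
  next
    case (Var i)
    have "i \<le> M + n" using Var q by auto
    then consider "i = 0" | "i \<in> {1..M}" | p where "p \<in> {1..n}" "i = M + p"
    proof (cases "i \<le> M")
      case True
      then show ?thesis using that(1,2) by (cases "i = 0") auto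
    next
      case False
      then show ?thesis using that(3)[of "i - M"] \<open>i \<le> M + n\<close> by auto
    qed
    then show ?case
    proof cases
      case 1
      have "cong_mod ?F 1 (?H * Var 0)"
        unfolding cong_mod_def graph_gens_def by (rule ideal_gen_base) auto
      then have "cong_mod ?F (?H ^ 1 * Var 0) 1" by (simp add: cong_mod_sym)
      then show ?thesis unfolding power_clears_def 1 by (intro exI[of _ 1] exI[of _ 1]) simp
    next
      case 2
      then show ?thesis by (intro power_clears_of_vars) simp
    next
      case 3
      define H' where "H' = (\<Prod>p'\<in>{1..n} - {p}. h p')"
      have "h p * Var (M + p) - g p \<in> ideal_gen ?F"
        unfolding graph_gens_def using 3(1) by (intro ideal_gen_base) blast
      then have "H' * (h p * Var (M + p) - g p) \<in> ideal_gen ?F" by (rule ideal_gen_mult)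
      moreover have "?H = h p * H'" unfolding H'_def using 3(1) by (simp add: prod.remove)
      ultimately have "cong_mod ?F (?H ^ 1 * Var i) (H' * g p)"
        unfolding cong_mod_def 3(2) by (simp add: algebra_simps)
      moreover have "mvars (H' * g p) \<subseteq> {1..M}"
        using mvars_mult[of H' "g p"] mvars_prod[of h "{1..n} - {p}"] hv gv 3(1) unfolding H'_def by blast
      ultimately show ?thesis unfolding power_clears_def by blast
    qed
  qed
qed

lemma graph_ideal_eliminant_iff:
  fixes g h :: "nat \<Rightarrow> 'k::field mpoly"
  assumes inf: "infinite (UNIV :: 'k set)"
    and hv: "\<forall>p\<in>{1..n}. mvars (h p) \<subseteq> {1..M} \<and> h p \<noteq> 0" and gv: "\<forall>p\<in>{1..n}. mvars (g p) \<subseteq> {1..M}"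
    and q: "mvars q \<subseteq> {M+1..M+n}"
  shows "q \<in> ideal_gen (graph_gens M n g h) \<longleftrightarrow>
    (\<forall>a\<in>denom_domain M n h. mpeval q (zpoint M (frac_map n g h a)) = 0)"
proof -
  let ?F = "graph_gens M n g h" and ?H = "\<Prod>p=1..n. h p"
  have hv': "\<forall>p\<in>{1..n}. mvars (h p) \<subseteq> {1..M}" using hv by blast
  have vanish_graph: "\<forall>f\<in>?F. mpeval f (graph_point M n g h a) = 0" if "a \<in> denom_domain M n h" for a
    using graph_gens_vanish_at_graph_point[OF hv' gv] that unfolding denom_domain_def by blast
  show ?thesis
  proof
    assume qI: "q \<in> ideal_gen ?F"
    show "\<forall>a\<in>denom_domain M n h. mpeval q (zpoint M (frac_map n g h a)) = 0"
      using mpeval_ideal_gen_eq_0[OF qI vanish_graph] mpeval_graph_point_high[OF q] by simp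
  next
    assume vanish: "\<forall>a\<in>denom_domain M n h. mpeval q (zpoint M (frac_map n g h a)) = 0"
    have "mvars q \<subseteq> {0..M + n}" using q by auto
    then obtain D R where R: "mvars R \<subseteq> {1..M}" "cong_mod ?F (?H ^ D * q) R"
      using graph_ideal_clears_denominators[OF hv' gv] unfolding power_clears_def by blast
    have "mpeval R a = 0" if "a \<in> aff M" "mpeval ?H a \<noteq> 0" for a
    proof -
      have a: "a \<in> denom_domain M n h" using that unfolding denom_domain_def by simp
      have "mpeval R a = mpeval R (graph_point M n g h a)"
        using mpeval_graph_point_low[OF R(1)] by simp
      also have "\<dots> = mpeval (?H ^ D * q) (graph_point M n g h a)"
        using cong_mod_mpeval[OF R(2) vanish_graph[OF a]] by simp
      also have "\<dots> = 0" using vanish a mpeval_graph_point_high[OF q] by simp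
      finally show ?thesis .
    qed
    moreover have "?H \<noteq> 0" using hv by simp
    moreover have "mvars ?H \<subseteq> {1..M}" using mvars_prod[of h "{1..n}"] hv' by blast
    ultimately have "R = 0" by (intro mpoly_eq_0_if_vanishes_off_zeros[OF inf _ _ R(1)]) auto
    then have "?H ^ D * q \<in> ideal_gen ?F" using R(2) unfolding cong_mod_def by simp
    then have in_ideal: "Var 0 ^ D * (?H ^ D * q) \<in> ideal_gen ?F" by (rule ideal_gen_mult)
    have "cong_mod ?F 1 (?H * Var 0)"
      unfolding cong_mod_def graph_gens_def by (rule ideal_gen_base) auto
    then have "cong_mod ?F (?H * Var 0) 1" by (rule cong_mod_sym)
    then have "cong_mod ?F ((?H * Var 0) ^ D * q) (1 ^ D * q)"
      by (intro cong_mod_mult cong_mod_power cong_mod_refl)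
    moreover have "(?H * Var 0) ^ D * q = Var 0 ^ D * (?H ^ D * q)"
      by (simp add: power_mult_distrib mult_ac)
    ultimately have "cong_mod ?F (Var 0 ^ D * (?H ^ D * q)) q" by (simp only: power_one mult_1_left)
    then show "q \<in> ideal_gen ?F" using cong_mod_ideal_gen_iff in_ideal by blast
  qed
qed

lemma mat_coords_index:
  fixes i N :: nat
  assumes "i \<in> {1..N * N}"
  shows "(i - 1) div N < N" "(i - 1) mod N < N"
proof -
  have "i - 1 < N * N" using assms by (auto intro: less_le_trans[of _ i])
  then show "(i - 1) div N < N" by (simp add: less_mult_imp_div_less)
  show "(i - 1) mod N < N" using assms by (cases N) auto
qed

lemma mat_coords_index_inv:
  fixes i j N :: nat
  assumes "i < N" "j < N"
  shows "i * N + j + 1 \<in> {1..N * N}"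
proof -
  have "i * N + j < (i + 1) * N" using assms by simp
  also have "\<dots> \<le> N * N" using assms(1) by (intro mult_le_mono1) simp
  finally show ?thesis by simp
qed

lemma mat_coords_in_aff: "mat_coords N A \<in> aff (N * N)"
  unfolding mat_coords_def aff_def by auto

definition mat_of_coords :: "nat \<Rightarrow> (nat \<Rightarrow> 'k) \<Rightarrow> 'k mat" where
  "mat_of_coords N c = mat N N (\<lambda>(i, j). c (i * N + j + 1))"

lemma mat_of_coords_mat_coords:
  assumes "A \<in> carrier_mat N N"
  shows "mat_of_coords N (mat_coords N A) = (A :: 'k::zero mat)"
proof (rule eq_matI)
  fix i j assume "i < dim_row A" "j < dim_col A"
  then have ij: "i < N" "j < N" using assms by auto
  then have "(i * N + j) div N = i" "(i * N + j) mod N = j" by auto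
  then show "mat_of_coords N (mat_coords N A) $$ (i, j) = A $$ (i, j)"
    unfolding mat_of_coords_def mat_coords_def using ij mat_coords_index_inv[OF ij] by auto
qed (use assms in \<open>auto simp: mat_of_coords_def\<close>)

lemma rational_on_det:
  assumes "\<forall>a\<in>D. B a \<in> carrier_mat N N"
    and entries: "\<And>i j. i < N \<Longrightarrow> j < N \<Longrightarrow> rational_on X D (\<lambda>a. B a $$ (i, j))"
  shows "rational_on X D (\<lambda>a. det (B a))"
proof -
  have "rational_on X D (\<lambda>a. \<Sum>\<pi>\<in>{\<pi>. \<pi> permutes {0..<N}}. signof \<pi> * (\<Prod>i=0..<N. B a $$ (i, \<pi> i)))"
  proof (intro rational_on_sum rational_on_mult rational_on_const rational_on_prod finite_permutations
      finite_atLeastLessThan)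
    fix \<pi> i assume "\<pi> \<in> {\<pi>. \<pi> permutes {0..<N}}" "i \<in> {0..<N}"
    then show "rational_on X D (\<lambda>a. B a $$ (i, \<pi> i))"
      using permutes_in_image[of \<pi> "{0..<N}" i] by (intro entries) auto
  qed
  then show ?thesis by (rule rational_on_cong) (use assms(1) in \<open>simp add: det_def'\<close>)
qed

lemma rational_on_regular_comp:
  assumes f: "regular_on_group N G f" and G: "G \<subseteq> carrier_mat N N" "\<forall>A\<in>G. det A \<noteq> 0"
    and B: "\<forall>a\<in>D. B a \<in> G"
    and entries: "\<And>i j. i < N \<Longrightarrow> j < N \<Longrightarrow> rational_on X D (\<lambda>a. B a $$ (i, j))"
  shows "rational_on X D (\<lambda>a. f (B a))"
proof -
  obtain P e where P: "mvars P \<subseteq> {1..N * N}" "\<forall>A\<in>G. f A = mpeval P (mat_coords N A) / det A ^ e"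
    using f unfolding regular_on_group_def by blast
  have "rational_on X D (\<lambda>a. mat_coords N (B a) i)" if "i \<in> mvars P" for i
  proof -
    have i: "i \<in> {1..N * N}" using that P(1) by blast
    show ?thesis
      using entries[OF mat_coords_index[OF i]] by (rule rational_on_cong) (use i in \<open>simp add: mat_coords_def\<close>)
  qed
  then have "rational_on X D (\<lambda>a. mpeval P (\<lambda>i. mat_coords N (B a) i) / det (B a) ^ e)"
    using B G by (intro rational_on_divide rational_on_mpeval_comp rational_on_power rational_on_det entries)
      auto
  then show ?thesis by (rule rational_on_cong) (use P(2) B in auto)
qed

lemma act_in_aff: "act n \<rho> A w \<in> aff n"
  unfolding act_def aff_def by auto

lemma rational_on_mpeval_act:
  assumes P: "mvars P \<subseteq> {1..n}"
    and \<rho>: "\<And>p q. p \<in> {1..n} \<Longrightarrow> q \<in> {1..n} \<Longrightarrow> rational_on X D (\<lambda>a. \<rho> p q (B a))"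
    and w: "\<And>q. q \<in> {1..n} \<Longrightarrow> rational_on X D (\<lambda>a. w a q)"
  shows "rational_on X D (\<lambda>a. mpeval P (act n \<rho> (B a) (w a)))"
proof -
  have "rational_on X D (\<lambda>a. mpeval P (\<lambda>p. act n \<rho> (B a) (w a) p))"
  proof (rule rational_on_mpeval_comp)
    fix p assume "p \<in> mvars P"
    then have p: "p \<in> {1..n}" using P by blast
    have "rational_on X D (\<lambda>a. \<Sum>q=1..n. \<rho> p q (B a) * w a q)"
      by (intro rational_on_sum rational_on_mult \<rho> w p finite_atLeastAtMost) auto
    then show "rational_on X D (\<lambda>a. act n \<rho> (B a) (w a) p)"
      by (rule rational_on_cong) (use p in \<open>simp add: act_def\<close>)
  qed
  then show ?thesis by simp
qed

lemma xpart_in_Ars: "a \<in> Ars_times_aff r s l \<Longrightarrow> xpart r s a \<in> Ars r s"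
proof -
  have "(\<Prod>i=1..r. xpart r s a i) = (\<Prod>i=1..r. a i)"
    by (intro prod.cong refl) (auto simp: xpart_def)
  then show "a \<in> Ars_times_aff r s l \<Longrightarrow> xpart r s a \<in> Ars r s"
    unfolding Ars_times_aff_def Ars_def xpart_def aff_def by auto
qed

lemma ypart_in_aff: "ypart r s l a \<in> aff l"
  unfolding ypart_def aff_def by auto

lemma Ars_times_aff_glue:
  assumes x: "x \<in> Ars r s" and y: "y \<in> aff l"
  obtains a where "a \<in> Ars_times_aff r s l" "xpart r s a = x" "ypart r s l a = y"
proof
  define a where "a i = (if i \<le> r + s then x i else y (i - (r + s)))" for i
  have "(\<Prod>i=1..r. a i) = (\<Prod>i=1..r. x i)"
    by (intro prod.cong refl) (auto simp: a_def)
  then show "a \<in> Ars_times_aff r s l"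
    using x y unfolding Ars_times_aff_def Ars_def aff_def a_def by auto
  show "xpart r s a = x"
  proof
    fix i show "xpart r s a i = x i"
      using x unfolding xpart_def a_def Ars_def aff_def by (cases "i = 0") auto
  qed
  show "ypart r s l a = y"
  proof
    fix i show "ypart r s l a i = y i"
      using y unfolding ypart_def a_def aff_def by (cases "i = 0") auto
  qed
qed

section \<open>Polynomials vanishing on the orbit\<close>

locale orbit_parametrization =
  fixes N n r s l :: nat and G :: "'k::field mat set" and \<rho> :: "nat \<Rightarrow> nat \<Rightarrow> 'k mat \<Rightarrow> 'k"
    and \<iota> :: "(nat \<Rightarrow> 'k) \<Rightarrow> 'k mat" and L :: "(nat \<Rightarrow> 'k) set" and \<tau> :: "(nat \<Rightarrow> 'k) \<Rightarrow> nat \<Rightarrow> 'k"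
    and g h :: "nat \<Rightarrow> 'k mpoly"
  assumes infinite_field: "infinite (UNIV :: 'k set)"
    and G_carrier: "G \<subseteq> carrier_mat N N" and G_det: "\<forall>A\<in>G. det A \<noteq> 0"
    and \<rho>_regular: "\<forall>p\<in>{1..n}. \<forall>q\<in>{1..n}. regular_on_group N G (\<rho> p q)"
    and \<iota>_dominant: "dominant_Ars_to_group r s N G \<iota>"
    and \<tau>_morphism: "morphism_aff l n \<tau>"
    and \<tau>_image: "\<tau> ` aff l \<subseteq> L" and L_closure: "L \<subseteq> zariski_closure n (\<tau> ` aff l)"
    and g_vars: "\<forall>p\<in>{1..n}. mvars (g p) \<subseteq> {1..r + s + l}"
    and h_vars: "\<forall>p\<in>{1..n}. mvars (h p) \<subseteq> {1..r} \<and> h p \<noteq> 0"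
    and f_eq: "\<forall>p\<in>{1..n}. \<forall>a\<in>Ars_times_aff r s l.
      mpeval (h p) a * (\<Sum>q=1..n. \<rho> p q (\<iota> (xpart r s a)) * \<tau> (ypart r s l a) q) = mpeval (g p) a"
begin

lemma \<iota>_in_G: "x \<in> Ars r s \<Longrightarrow> \<iota> x \<in> G"
  using \<iota>_dominant unfolding dominant_Ars_to_group_def morphism_Ars_to_group_def by blast

lemma h_vars_param: "\<forall>p\<in>{1..n}. mvars (h p) \<subseteq> {1..r + s + l} \<and> h p \<noteq> 0"
  using h_vars by fastforce

lemma param_eq_frac_map:
  assumes "a \<in> Ars_times_aff r s l \<inter> denom_domain (r + s + l) n h"
  shows "act n \<rho> (\<iota> (xpart r s a)) (\<tau> (ypart r s l a)) = frac_map n g h a"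
proof
  fix p
  show "act n \<rho> (\<iota> (xpart r s a)) (\<tau> (ypart r s l a)) p = frac_map n g h a p"
  proof (cases "p \<in> {1..n}")
    case True
    then have "mpeval (h p) a \<noteq> 0" using assms unfolding denom_domain_def by blast
    with True f_eq assms show ?thesis by (auto simp: act_def frac_map_def field_simps)
  next
    case False
    then show ?thesis by (auto simp: act_def frac_map_def)
  qed
qed

lemma aff_subset_closure_param_domain:
  "aff (r + s + l) \<subseteq> zariski_closure (r + s + l) (Ars_times_aff r s l \<inter> denom_domain (r + s + l) n h)"
proof -
  define Q where "Q = (\<Prod>i=1..r. Var i) * (\<Prod>p=1..n. h p)"
  have "mpeval (\<Prod>i=1..r. Var i :: 'k mpoly) (\<lambda>_. 1) = 1" by simp
  then have "(\<Prod>i=1..r. Var i :: 'k mpoly) \<noteq> 0" by (metis mpeval_0 zero_neq_one)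
  then have Q: "Q \<noteq> 0" unfolding Q_def using h_vars by simp
  have Q_vars: "mvars Q \<subseteq> {1..r + s + l}"
    using mvars_mult[of "\<Prod>i=1..r. Var i" "\<Prod>p=1..n. h p"] mvars_prod[of Var "{1..r}"] mvars_prod[of h "{1..n}"]
      h_vars_param unfolding Q_def by fastforce
  have "{a \<in> aff (r + s + l). mpeval Q a \<noteq> 0} = Ars_times_aff r s l \<inter> denom_domain (r + s + l) n h"
    unfolding Q_def Ars_times_aff_def denom_domain_def by auto
  then show ?thesis using aff_subset_closure_nonzero_locus[OF infinite_field Q Q_vars] by simp
qed

lemma frac_image_vanishes_if_orbit_vanishes:
  assumes P: "mvars P \<subseteq> {1..n}" and vanish: "\<forall>w\<in>orbit_set n \<rho> G L. mpeval P w = 0"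
  shows "\<forall>a\<in>denom_domain (r + s + l) n h. mpeval P (frac_map n g h a) = 0"
proof (rule rational_on_vanishes_on_closure[where S = "Ars_times_aff r s l \<inter> denom_domain (r + s + l) n h"])
  let ?U = "denom_domain (r + s + l) n h"
  have "rational_on {1..r + s + l} ?U (\<lambda>a. frac_map n g h a p)" if "p \<in> mvars P" for p
  proof -
    have p: "p \<in> {1..n}" using that P by blast
    then have "mvars (g p) \<subseteq> {1..r + s + l}" "mvars (h p) \<subseteq> {1..r + s + l}"
      using g_vars h_vars_param by auto
    then have "rational_on {1..r + s + l} ?U (\<lambda>a. mpeval (g p) a / mpeval (h p) a)"
      using p by (intro rational_on_divide rational_on_mpeval) (auto simp: denom_domain_def)
    then show ?thesis by (rule rational_on_cong) (use p in \<open>simp add: frac_map_def\<close>)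
  qed
  then show "rational_on {1..r + s + l} ?U (\<lambda>a. mpeval P (frac_map n g h a))"
    using rational_on_mpeval_comp[of P "{1..r + s + l}" ?U "\<lambda>p a. frac_map n g h a p"] by simp
  show "\<forall>a\<in>Ars_times_aff r s l \<inter> ?U. mpeval P (frac_map n g h a) = 0"
  proof
    fix a assume a: "a \<in> Ars_times_aff r s l \<inter> ?U"
    then have "\<iota> (xpart r s a) \<in> G" using \<iota>_in_G xpart_in_Ars by blast
    moreover have "\<tau> (ypart r s l a) \<in> L" using \<tau>_image ypart_in_aff by blast
    ultimately have "act n \<rho> (\<iota> (xpart r s a)) (\<tau> (ypart r s l a)) \<in> orbit_set n \<rho> G L"
      unfolding orbit_set_def by blast
    then have "frac_map n g h a \<in> orbit_set n \<rho> G L" by (simp only: param_eq_frac_map[OF a])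
    then show "mpeval P (frac_map n g h a) = 0" using vanish by blast
  qed
  show "?U \<subseteq> zariski_closure (r + s + l) (Ars_times_aff r s l \<inter> ?U)"
    using aff_subset_closure_param_domain unfolding denom_domain_def by blast
qed (auto simp: denom_domain_def Ars_times_aff_def)

lemma rational_on_\<iota>_entry:
  assumes "i < N" "j < N"
  shows "rational_on {1..r + s + l} (Ars_times_aff r s l) (\<lambda>a. \<iota> (xpart r s a) $$ (i, j))"
proof -
  obtain P e where P: "mvars P \<subseteq> {1..r + s}"
    "\<forall>x\<in>Ars r s. \<iota> x $$ (i, j) = mpeval P x / (\<Prod>l=1..r. x l) ^ e"
    using \<iota>_dominant assms unfolding dominant_Ars_to_group_def morphism_Ars_to_group_def by blast
  have "rational_on {1..r + s + l} (Ars_times_aff r s l) (\<lambda>a. mpeval P a / (\<Prod>l=1..r. a l) ^ e)"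
    using P(1) by (intro rational_on_divide rational_on_mpeval rational_on_power rational_on_prod
        rational_on_var finite_atLeastAtMost) (auto simp: Ars_times_aff_def)
  then show ?thesis
  proof (rule rational_on_cong)
    fix a :: "nat \<Rightarrow> 'k" assume a: "a \<in> Ars_times_aff r s l"
    have "mpeval P (xpart r s a) = mpeval P a"
      by (rule mpeval_cong) (use P(1) in \<open>auto simp: xpart_def\<close>)
    moreover have "(\<Prod>l=1..r. xpart r s a l) = (\<Prod>l=1..r. a l)"
      by (intro prod.cong refl) (auto simp: xpart_def)
    ultimately show "\<iota> (xpart r s a) $$ (i, j) = mpeval P a / (\<Prod>l=1..r. a l) ^ e"
      using P(2) xpart_in_Ars[OF a] by simp
  qed
qed

lemma rational_on_\<tau>_coord:
  assumes "q \<in> {1..n}"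
  shows "rational_on {1..r + s + l} D (\<lambda>a. \<tau> (ypart r s l a) q)"
proof -
  obtain P where P: "mvars P \<subseteq> {1..l}" "\<forall>b\<in>aff l. \<tau> b q = mpeval P b"
    using \<tau>_morphism assms unfolding morphism_aff_def by blast
  have "rational_on {1..r + s + l} D (\<lambda>a. mpeval P (\<lambda>j. a (r + s + j)))"
    using P(1) by (intro rational_on_mpeval_comp rational_on_var) auto
  then show ?thesis
  proof (rule rational_on_cong)
    fix a :: "nat \<Rightarrow> 'k"
    have "\<tau> (ypart r s l a) q = mpeval P (ypart r s l a)" using P(2) ypart_in_aff by blast
    also have "\<dots> = mpeval P (\<lambda>j. a (r + s + j))"
      by (rule mpeval_cong) (use P(1) in \<open>auto simp: ypart_def\<close>)
    finally show "\<tau> (ypart r s l a) q = mpeval P (\<lambda>j. a (r + s + j))" .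
  qed
qed

lemma param_vanishes_if_frac_image_vanishes:
  assumes P: "mvars P \<subseteq> {1..n}"
    and vanish: "\<forall>a\<in>denom_domain (r + s + l) n h. mpeval P (frac_map n g h a) = 0"
  shows "\<forall>a\<in>Ars_times_aff r s l. mpeval P (act n \<rho> (\<iota> (xpart r s a)) (\<tau> (ypart r s l a))) = 0"
proof (rule rational_on_vanishes_on_closure[where S = "Ars_times_aff r s l \<inter> denom_domain (r + s + l) n h"])
  have "rational_on {1..r + s + l} (Ars_times_aff r s l) (\<lambda>a. \<rho> p q (\<iota> (xpart r s a)))"
    if "p \<in> {1..n}" "q \<in> {1..n}" for p q
    by (rule rational_on_regular_comp[OF _ G_carrier G_det _ rational_on_\<iota>_entry])
      (use \<rho>_regular that in blast, blast intro: \<iota>_in_G xpart_in_Ars)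
  then show "rational_on {1..r + s + l} (Ars_times_aff r s l)
      (\<lambda>a. mpeval P (act n \<rho> (\<iota> (xpart r s a)) (\<tau> (ypart r s l a))))"
    by (intro rational_on_mpeval_act[OF P] rational_on_\<tau>_coord)
  show "\<forall>a\<in>Ars_times_aff r s l \<inter> denom_domain (r + s + l) n h.
      mpeval P (act n \<rho> (\<iota> (xpart r s a)) (\<tau> (ypart r s l a))) = 0"
    using vanish param_eq_frac_map by simp
  show "Ars_times_aff r s l \<subseteq>
      zariski_closure (r + s + l) (Ars_times_aff r s l \<inter> denom_domain (r + s + l) n h)"
    using aff_subset_closure_param_domain unfolding Ars_times_aff_def by blast
qed (auto simp: Ars_times_aff_def)

lemma group_vanishes_if_param_vanishes:
  assumes P: "mvars P \<subseteq> {1..n}" and vanish: "\<forall>x\<in>Ars r s. mpeval P (act n \<rho> (\<iota> x) w) = 0"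
  shows "\<forall>A\<in>G. mpeval P (act n \<rho> A w) = 0"
proof -
  let ?D = "mat_coords N ` G" and ?S = "mat_coords N ` \<iota> ` Ars r s"
  have coords_inv: "mat_of_coords N (mat_coords N A) = A" if "A \<in> G" for A
    using that G_carrier mat_of_coords_mat_coords by blast
  have "\<forall>c\<in>?D. mpeval P (act n \<rho> (mat_of_coords N c) w) = 0"
  proof (rule rational_on_vanishes_on_closure[where S = ?S])
    have "rational_on {1..N * N} ?D (\<lambda>c. \<rho> p q (mat_of_coords N c))"
      if "p \<in> {1..n}" "q \<in> {1..n}" for p q
    proof (rule rational_on_regular_comp[OF _ G_carrier G_det])
      show "regular_on_group N G (\<rho> p q)" using \<rho>_regular that by blast
      show "\<forall>c\<in>?D. mat_of_coords N c \<in> G" using coords_inv by auto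
      fix i j assume "i < N" "j < N"
      then show "rational_on {1..N * N} ?D (\<lambda>c. mat_of_coords N c $$ (i, j))"
        by (intro rational_on_cong[OF rational_on_var[OF mat_coords_index_inv]])
          (auto simp: mat_of_coords_def)
    qed
    then show "rational_on {1..N * N} ?D (\<lambda>c. mpeval P (act n \<rho> (mat_of_coords N c) w))"
      by (intro rational_on_mpeval_act[OF P] rational_on_const)
    show "\<forall>c\<in>?S. mpeval P (act n \<rho> (mat_of_coords N c) w) = 0"
      using vanish coords_inv \<iota>_in_G by auto
    show "?S \<subseteq> ?D" using \<iota>_in_G by blast
    show "?S \<subseteq> aff (N * N)" using mat_coords_in_aff by blast
    show "?D \<subseteq> zariski_closure (N * N) ?S"
      using \<iota>_dominant unfolding dominant_Ars_to_group_def by blast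
  qed
  then show ?thesis using coords_inv by auto
qed

lemma L_vanishes_if_\<tau>_vanishes:
  assumes P: "mvars P \<subseteq> {1..n}" and vanish: "\<forall>y\<in>aff l. mpeval P (act n \<rho> A (\<tau> y)) = 0"
  shows "\<forall>w\<in>L. mpeval P (act n \<rho> A w) = 0"
proof (rule rational_on_vanishes_on_closure[where S = "\<tau> ` aff l"])
  show "rational_on {1..n} L (\<lambda>w. mpeval P (act n \<rho> A w))"
    by (intro rational_on_mpeval_act[OF P] rational_on_const rational_on_var)
  show "\<forall>w\<in>\<tau> ` aff l. mpeval P (act n \<rho> A w) = 0" using vanish by blast
  show "\<tau> ` aff l \<subseteq> aff n" using \<tau>_morphism unfolding morphism_aff_def by blast
qed (use \<tau>_image L_closure in auto)

lemma orbit_vanishing_iff: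
  assumes P: "mvars P \<subseteq> {1..n}"
  shows "(\<forall>w\<in>orbit_set n \<rho> G L. mpeval P w = 0) \<longleftrightarrow>
    (\<forall>a\<in>denom_domain (r + s + l) n h. mpeval P (frac_map n g h a) = 0)"
proof
  assume "\<forall>a\<in>denom_domain (r + s + l) n h. mpeval P (frac_map n g h a) = 0"
  then have param: "\<forall>a\<in>Ars_times_aff r s l. mpeval P (act n \<rho> (\<iota> (xpart r s a)) (\<tau> (ypart r s l a))) = 0"
    by (rule param_vanishes_if_frac_image_vanishes[OF P])
  then have "\<forall>x\<in>Ars r s. mpeval P (act n \<rho> (\<iota> x) (\<tau> y)) = 0" if y: "y \<in> aff l" for y
  proof (intro ballI)
    fix x :: "nat \<Rightarrow> 'k" assume "x \<in> Ars r s"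
    then obtain a where "a \<in> Ars_times_aff r s l" "xpart r s a = x" "ypart r s l a = y"
      by (rule Ars_times_aff_glue[OF _ y])
    with param show "mpeval P (act n \<rho> (\<iota> x) (\<tau> y)) = 0" by blast
  qed
  then have "\<forall>A\<in>G. mpeval P (act n \<rho> A (\<tau> y)) = 0" if "y \<in> aff l" for y
    using group_vanishes_if_param_vanishes[OF P] that by blast
  then have "\<forall>w\<in>L. mpeval P (act n \<rho> A w) = 0" if "A \<in> G" for A
    using L_vanishes_if_\<tau>_vanishes[OF P] that by blast
  then show "\<forall>w\<in>orbit_set n \<rho> G L. mpeval P w = 0"
    unfolding orbit_set_def by blast
qed (rule frac_image_vanishes_if_orbit_vanishes[OF P])

lemma orbit_vanishing_iff_graph_ideal:
  assumes q: "mvars q \<subseteq> {r + s + l + 1..r + s + l + n}"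
  shows "(\<forall>w\<in>orbit_set n \<rho> G L. mpeval q (zpoint (r + s + l) w) = 0) \<longleftrightarrow>
    q \<in> ideal_gen (graph_gens (r + s + l) n g h)"
proof -
  obtain P where P: "mvars P \<subseteq> {1..n}" "\<And>v. mpeval P v = mpeval q (zpoint (r + s + l) v)"
    using mpoly_unshift_vars[OF q] by blast
  show ?thesis
    using orbit_vanishing_iff[OF P(1)] graph_ideal_eliminant_iff[OF infinite_field h_vars_param g_vars q]
    unfolding P(2) by simp
qed

lemma zariski_closure_orbit_iff:
  "v \<in> zariski_closure n (orbit_set n \<rho> G L) \<longleftrightarrow> v \<in> aff n \<and>
    (\<forall>q\<in>ideal_gen (graph_gens (r + s + l) n g h).
      mvars q \<subseteq> {r + s + l + 1..r + s + l + n} \<longrightarrow> mpeval q (zpoint (r + s + l) v) = 0)"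
proof -
  have "orbit_set n \<rho> G L \<subseteq> aff n" unfolding orbit_set_def using act_in_aff by blast
  then show ?thesis
    using zariski_closure_iff_shifted[of _ n v "r + s + l"] orbit_vanishing_iff_graph_ideal by blast
qed

end

theorem theorem4:
  fixes N n r s l :: nat
    and G :: "'k::field mat set"
    and \<rho> :: "nat \<Rightarrow> nat \<Rightarrow> 'k mat \<Rightarrow> 'k"
    and \<iota> :: "(nat \<Rightarrow> 'k) \<Rightarrow> 'k mat"
    and L :: "(nat \<Rightarrow> 'k) set"
    and \<tau> :: "(nat \<Rightarrow> 'k) \<Rightarrow> nat \<Rightarrow> 'k"
    and g h :: "nat \<Rightarrow> 'k mpoly"
    and ord :: "(nat \<Rightarrow>\<^sub>0 nat) \<Rightarrow> (nat \<Rightarrow>\<^sub>0 nat) \<Rightarrow> bool"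
    and Gb :: "'k mpoly set"
  assumes k_closed: "alg_closed TYPE('k)"
    and G_group: "linear_algebraic_group N G"
    and G_conn: "zariski_connected_group N G"
    and V_module: "algebraic_G_module N G n \<rho>"
    and iota: "dominant_Ars_to_group r s N G \<iota>"
    and L_lin: "affine_linear_subvariety n L"
    and tau: "morphism_aff l n \<tau>"
    and tau_img: "\<tau> ` aff l \<subseteq> L" "L \<subseteq> zariski_closure n (\<tau> ` aff l)"
    and g_vars: "\<forall>p\<in>{1..n}. mvars (g p) \<subseteq> {1..r + s + l}"
    and h_vars: "\<forall>p\<in>{1..n}. mvars (h p) \<subseteq> {1..r} \<and> h p \<noteq> 0"
    and f_eq: "\<forall>p\<in>{1..n}. \<forall>a\<in>Ars_times_aff r s l.
                 mpeval (h p) a * (\<Sum>q=1..n. \<rho> p q (\<iota> (xpart r s a)) * \<tau> (ypart r s l a) q)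
                   = mpeval (g p) a"
    and ord_elim: "elimination_order ord {0..r + s + l}"
    and GB: "is_groebner_basis ord {0..r + s + l + n} Gb
               ((\<lambda>p. h p * Var (r + s + l + p) - g p) ` {1..n}
                \<union> {1 - (\<Prod>p=1..n. h p) * Var 0})"
  shows "zariski_closure n (orbit_set n \<rho> G L) =
         {v \<in> aff n. \<forall>q\<in>{q \<in> Gb. mvars q \<subseteq> {r + s + l + 1..r + s + l + n}}.
                       mpeval q (zpoint (r + s + l) v) = 0}"
proof -
  interpret orbit_parametrization N n r s l G \<rho> \<iota> L \<tau> g h
  proof
    show "infinite (UNIV :: 'k set)" by (rule alg_closed_imp_infinite[OF k_closed])
    show "G \<subseteq> carrier_mat N N" "\<forall>A\<in>G. det A \<noteq> 0"
      using G_group unfolding linear_algebraic_group_def by blast+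
    show "\<forall>p\<in>{1..n}. \<forall>q\<in>{1..n}. regular_on_group N G (\<rho> p q)"
      using V_module unfolding algebraic_G_module_def by blast
  qed (fact iota tau tau_img g_vars h_vars f_eq)+
  have "{0..r + s + l + n} - {0..r + s + l} = {r + s + l + 1..r + s + l + n}" by auto
  then have "v \<in> zariski_closure n (orbit_set n \<rho> G L) \<longleftrightarrow> v \<in> aff n \<and>
      (\<forall>q\<in>Gb. mvars q \<subseteq> {r + s + l + 1..r + s + l + n} \<longrightarrow> mpeval q (zpoint (r + s + l) v) = 0)" for v
    using zariski_closure_orbit_iff groebner_basis_eliminants_vanish_iff[OF ord_elim GB[folded graph_gens_def]]
    by simp
  then show ?thesis by blast
qed

end
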